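(* Let $b>0$ and $0\le\omega<\pi^2$ be constants and let $\mathcal{A}$ be the global attractor of the multivalued semiflow $G$ generated by the autonomous problem (P). Then $\mathcal{A}$ is compact in $V^{2r}$ for every $0\le r<1$.
   Context: $H=L^2(0,1)$, $V=H_0^1(0,1)$, $A=-d^2/dx^2$ with $D(A)=H^2(0,1)\cap V$, $V^{2r}=D(A^r)$ (domain of the fractional power, with the norm $\|A^r\cdot\|$). $H_0(s)=\{-1\}$ ($s<0$), $[-1,1]$ ($s=0$), $\{1\}$ ($s>0$). Problem (P): $\partial_t u-\partial_{xx}u\in bH_0(u)+\omega u$ on $(0,\infty)\times(0,1)$, Dirichlet conditions, $u(0)=u_0\in H$. A solution is $u\in C([0,\infty),H)$ with $u(0)=u_0$, absolutely continuous on each $[T_1,T_2]$, $0<T_1<T_2$, $u(t)\in D(A)$ a.e., and there is $r\in L^2_{loc}(0,\infty;H)$ with $r(t)(x)\in bH_0(u(t)(x))+\omega u(t)(x)$ a.e. and $du/dt+Au=r$ a.e. $G(t,u_0)=\{u(t): u \text{ solution with } u(0)=u_0\}$. The global attractor (known to exist) is the compact set $\mathcal{A}\subset H$ with $G(t,\mathcal{A})=\mathcal{A}$ for all $t\ge0$ and $\sup_{y\in G(t,B)}\operatorname{dist}_H(y,\mathcal{A})\to0$ as $t\to\infty$ for every bounded $B\subset H$. *)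

theory Defs
  imports "HOL-Analysis.Analysis"
begin

(* Elements of H = L^2(0,1) are represented by functions real => real;
   equality in H is equality up to the L^2 seminorm (i.e. a.e.). *)

definition inH :: "(real \<Rightarrow> real) \<Rightarrow> bool" where
  "inH f \<longleftrightarrow> f \<in> borel_measurable (lebesgue_on {0..1})
          \<and> integrable (lebesgue_on {0..1}) (\<lambda>x. (f x)\<^sup>2)"

definition hnorm :: "(real \<Rightarrow> real) \<Rightarrow> real" where
  "hnorm f = sqrt (integral\<^sup>L (lebesgue_on {0..1}) (\<lambda>x. (f x)\<^sup>2))"

definition hdist :: "(real \<Rightarrow> real) \<Rightarrow> (real \<Rightarrow> real) \<Rightarrow> real" where
  "hdist f g = hnorm (\<lambda>x. f x - g x)"

(* sine coefficients w.r.t. the orthonormal eigenbasis e_k = sqrt 2 sin(k pi x), k = Suc j *)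
definition coef :: "(real \<Rightarrow> real) \<Rightarrow> nat \<Rightarrow> real" where
  "coef f j = sqrt 2 * integral\<^sup>L (lebesgue_on {0..1}) (\<lambda>x. f x * sin (real (Suc j) * pi * x))"

(* eigenvalues of A = -d^2/dx^2 with Dirichlet conditions *)
definition lam :: "nat \<Rightarrow> real" where
  "lam j = (real (Suc j) * pi)\<^sup>2"

(* V^{2r} = D(A^r) (spectral definition of the fractional power) and its norm |A^r .| *)
definition inDA :: "real \<Rightarrow> (real \<Rightarrow> real) \<Rightarrow> bool" where
  "inDA r f \<longleftrightarrow> inH f \<and> summable (\<lambda>j. lam j powr (2 * r) * (coef f j)\<^sup>2)"

definition Arnorm :: "real \<Rightarrow> (real \<Rightarrow> real) \<Rightarrow> real" where
  "Arnorm r f = sqrt (\<Sum>j. lam j powr (2 * r) * (coef f j)\<^sup>2)"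

definition isA :: "(real \<Rightarrow> real) \<Rightarrow> (real \<Rightarrow> real) \<Rightarrow> bool" where
  "isA u g \<longleftrightarrow> inDA 1 u \<and> inH g \<and> (\<forall>j. coef g j = lam j * coef u j)"

definition H0 :: "real \<Rightarrow> real set" where
  "H0 s = (if s < 0 then {-1} else if s = 0 then {-1..1} else {1})"

definition hderiv :: "(real \<Rightarrow> real \<Rightarrow> real) \<Rightarrow> real \<Rightarrow> (real \<Rightarrow> real) \<Rightarrow> bool" where
  "hderiv u t w \<longleftrightarrow> inH w \<and>
     ((\<lambda>h. hdist (\<lambda>x. (u (t + h) x - u t x) / h) w) \<longlongrightarrow> 0) (at 0)"

definition hcont :: "(real \<Rightarrow> real \<Rightarrow> real) \<Rightarrow> bool" where
  "hcont u \<longleftrightarrow> (\<forall>t\<ge>0. inH (u t)) \<and>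
     (\<forall>t\<ge>0. \<forall>e>0. \<exists>d>0. \<forall>s\<ge>0. \<bar>s - t\<bar> < d \<longrightarrow> hdist (u s) (u t) < e)"

definition habscont :: "(real \<Rightarrow> real \<Rightarrow> real) \<Rightarrow> real \<Rightarrow> real \<Rightarrow> bool" where
  "habscont u T1 T2 \<longleftrightarrow> (\<forall>e>0. \<exists>d>0. \<forall>(n::nat) (a::nat \<Rightarrow> real) (b::nat \<Rightarrow> real).
      (\<forall>i<n. T1 \<le> a i \<and> a i \<le> b i \<and> b i \<le> T2) \<and>
      (\<forall>i<n. \<forall>j<n. i \<noteq> j \<longrightarrow> b i \<le> a j \<or> b j \<le> a i) \<and>
      (\<Sum>i<n. b i - a i) < d
      \<longrightarrow> (\<Sum>i<n. hdist (u (b i)) (u (a i))) < e)"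

(* r in L^2_loc(0,infinity; H): weakly (hence strongly, H separable) measurable,
   with square norm integrable on every [0,T] *)
definition L2loc :: "(real \<Rightarrow> real \<Rightarrow> real) \<Rightarrow> bool" where
  "L2loc r \<longleftrightarrow> (AE t in lebesgue_on {0<..}. inH (r t)) \<and>
     (\<forall>phi. inH phi \<longrightarrow>
        (\<lambda>t. integral\<^sup>L (lebesgue_on {0..1}) (\<lambda>x. r t x * phi x)) \<in> borel_measurable (lebesgue_on {0<..})) \<and>
     (\<forall>T>0. set_integrable lebesgue {0..T} (\<lambda>t. (hnorm (r t))\<^sup>2))"

definition solP :: "real \<Rightarrow> real \<Rightarrow> (real \<Rightarrow> real) \<Rightarrow> (real \<Rightarrow> real \<Rightarrow> real) \<Rightarrow> bool" where
  "solP b \<omega> u0 u \<longleftrightarrow>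
     hcont u \<and> hdist (u 0) u0 = 0 \<and>
     (\<forall>T1 T2. 0 < T1 \<and> T1 < T2 \<longrightarrow> habscont u T1 T2) \<and>
     (AE t in lebesgue_on {0<..}. inDA 1 (u t)) \<and>
     (\<exists>r. L2loc r \<and>
        (AE t in lebesgue_on {0<..}. AE x in lebesgue_on {0..1}.
            r t x \<in> {b * s + \<omega> * u t x | s. s \<in> H0 (u t x)}) \<and>
        (AE t in lebesgue_on {0<..}. \<exists>w g. hderiv u t w \<and> isA (u t) g \<and>
            hdist (\<lambda>x. w x + g x) (r t) = 0))"

(* G(t,u0), as a subset of H (closed under a.e. equality) *)
definition Gmap :: "real \<Rightarrow> real \<Rightarrow> real \<Rightarrow> (real \<Rightarrow> real) \<Rightarrow> (real \<Rightarrow> real) set" where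
  "Gmap b \<omega> t u0 = {v. inH v \<and> (\<exists>u. solP b \<omega> u0 u \<and> hdist v (u t) = 0)}"

definition Gset :: "real \<Rightarrow> real \<Rightarrow> real \<Rightarrow> (real \<Rightarrow> real) set \<Rightarrow> (real \<Rightarrow> real) set" where
  "Gset b \<omega> t B = (\<Union>u0\<in>B. Gmap b \<omega> t u0)"

definition hbounded :: "(real \<Rightarrow> real) set \<Rightarrow> bool" where
  "hbounded B \<longleftrightarrow> (\<forall>f\<in>B. inH f) \<and> (\<exists>M. \<forall>f\<in>B. hnorm f \<le> M)"

definition Hcompact :: "(real \<Rightarrow> real) set \<Rightarrow> bool" where
  "Hcompact K \<longleftrightarrow> (\<forall>f\<in>K. inH f) \<and>
     (\<forall>s::nat \<Rightarrow> real \<Rightarrow> real. (\<forall>n. s n \<in> K) \<longrightarrow>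
        (\<exists>a\<in>K. \<exists>\<sigma>::nat \<Rightarrow> nat. strict_mono \<sigma> \<and> (\<lambda>n. hdist (s (\<sigma> n)) a) \<longlonglongrightarrow> 0))"

definition Vcompact :: "real \<Rightarrow> (real \<Rightarrow> real) set \<Rightarrow> bool" where
  "Vcompact r K \<longleftrightarrow> (\<forall>f\<in>K. inDA r f) \<and>
     (\<forall>s::nat \<Rightarrow> real \<Rightarrow> real. (\<forall>n. s n \<in> K) \<longrightarrow>
        (\<exists>a\<in>K. \<exists>\<sigma>::nat \<Rightarrow> nat. strict_mono \<sigma> \<and>
           (\<lambda>n. Arnorm r (\<lambda>x. s (\<sigma> n) x - a x)) \<longlonglongrightarrow> 0))"

definition global_attractor :: "real \<Rightarrow> real \<Rightarrow> (real \<Rightarrow> real) set \<Rightarrow> bool" where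
  "global_attractor b \<omega> K \<longleftrightarrow> Hcompact K \<and>
     (\<forall>t\<ge>0. Gset b \<omega> t K = K) \<and>
     (\<forall>B. hbounded B \<longrightarrow>
        (\<forall>e>0. \<exists>T. \<forall>t\<ge>T. \<forall>y\<in>Gset b \<omega> t B. \<exists>a\<in>K. hdist y a < e))"

end

theory Submission
  imports Defs
begin

(*
  Invariance of the attractor writes every v in it as u(1) for a solution u whose trajectory
  stays in the attractor, hence is bounded in H by some R; then so is the forcing
  r(t) in b H0(u(t)) + omega u(t).  The sine coefficients c_j of u are absolutely continuous
  with c_j' = r_j - lam_j c_j almost everywhere, so by variation of constants on [1/2, 1]

    c_j(1) = exp (- lam_j / 2) c_j(1/2) + integral over [1/2, 1] of exp (- lam_j (1 - t)) r_j(t).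

  Cauchy-Schwarz, lam^beta exp (- lam x) <= x^(-beta) and Bessel's inequality turn this into a
  bound on sum_j lam_j^(1 + beta) c_j(1)^2 that is uniform on the attractor, for every beta < 1.
  A set that is compact in H and bounded in this stronger norm is compact in V^{2r} for
  2r < 1 + beta: low modes converge with the H-limit, high modes are uniformly small.

  The smoothing works for all real b and omega.
*)

section \<open>Sine coefficients in \<open>L\<^sup>2(0,1)\<close>\<close>

abbreviation M01 :: "real measure" where
  "M01 \<equiv> lebesgue_on {0..1}"

lemma integrable_lebesgue_on_Icc_bounded:
  fixes f :: "real \<Rightarrow> real"
  assumes "f \<in> borel_measurable (lebesgue_on {a..b})" and "\<And>x. x \<in> {a..b} \<Longrightarrow> \<bar>f x\<bar> \<le> B"
  shows "integrable (lebesgue_on {a..b}) f"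
proof (rule finite_measure.integrable_const_bound)
  show "finite_measure (lebesgue_on {a..b})"
    by (rule finite_measure_lebesgue_on) auto
  show "AE x in lebesgue_on {a..b}. norm (f x) \<le> B"
    using assms(2) by (intro AE_I2) auto
qed (use assms(1) in simp)

lemma integrable_lebesgue_on_Icc_continuous:
  fixes f :: "real \<Rightarrow> real"
  assumes "continuous_on {a..b} f"
  shows "integrable (lebesgue_on {a..b}) f"
proof -
  obtain B where "\<forall>y\<in>f ` {a..b}. norm y \<le> B"
    using compact_imp_bounded[OF compact_continuous_image[OF assms compact_Icc]]
    unfolding bounded_iff by blast
  moreover have "f \<in> borel_measurable (lebesgue_on {a..b})"
    using assms by (intro continuous_imp_measurable_on_sets_lebesgue) auto
  ultimately show ?thesis
    by (intro integrable_lebesgue_on_Icc_bounded) auto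
qed

lemma has_integral_nonneg_imp_integrable_lebesgue_on:
  fixes f :: "real \<Rightarrow> real"
  assumes f: "(f has_integral I) {a..b}" and nonneg: "\<And>x. x \<in> {a..b} \<Longrightarrow> 0 \<le> f x"
  shows "integrable (lebesgue_on {a..b}) f" and "integral\<^sup>L (lebesgue_on {a..b}) f = I"
proof -
  have "f absolutely_integrable_on {a..b}"
    using assms by (intro nonnegative_absolutely_integrable_1) (auto simp: has_integral_integrable)
  then show int: "integrable (lebesgue_on {a..b}) f"
    by (simp add: integrable_restrict_space set_integrable_def)
  show "integral\<^sup>L (lebesgue_on {a..b}) f = I"
    using lebesgue_integral_eq_integral[OF int] integral_unique[OF f] by simp
qed

lemma Cauchy_Schwarz_integral:
  fixes f g :: "'a \<Rightarrow> real"
  assumes "integrable M (\<lambda>x. (f x)\<^sup>2)" and "integrable M (\<lambda>x. (g x)\<^sup>2)"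
    and "integrable M (\<lambda>x. f x * g x)"
  shows "(\<integral>x. f x * g x \<partial>M)\<^sup>2 \<le> (\<integral>x. (f x)\<^sup>2 \<partial>M) * (\<integral>x. (g x)\<^sup>2 \<partial>M)"
proof -
  define A where "A = (\<integral>x. (f x)\<^sup>2 \<partial>M)"
  define B where "B = (\<integral>x. f x * g x \<partial>M)"
  define C where "C = (\<integral>x. (g x)\<^sup>2 \<partial>M)"
  have quadratic_nonneg: "0 \<le> t\<^sup>2 * A - 2 * t * B + C" for t
  proof -
    have "0 \<le> (\<integral>x. (t * f x - g x)\<^sup>2 \<partial>M)"
      by (rule integral_nonneg_AE) auto
    also have "(\<lambda>x. (t * f x - g x)\<^sup>2) = (\<lambda>x. t\<^sup>2 * (f x)\<^sup>2 - 2 * t * (f x * g x) + (g x)\<^sup>2)"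
      by (auto simp: power2_eq_square algebra_simps)
    also have "(\<integral>x. \<dots> x \<partial>M) = t\<^sup>2 * A - 2 * t * B + C"
      using assms by (simp add: A_def B_def C_def)
    finally show ?thesis .
  qed
  have "0 \<le> A"
    unfolding A_def by (rule integral_nonneg_AE) auto
  show ?thesis
  proof (cases "A = 0")
    case True
    have "B = 0"
    proof (rule ccontr)
      assume "B \<noteq> 0"
      with True quadratic_nonneg[of "(C + 1) / (2 * B)"] show False
        by (simp add: field_simps)
    qed
    then show ?thesis
      using True by (simp add: A_def B_def C_def)
  next
    case False
    with \<open>0 \<le> A\<close> have "0 < A" by simp
    have "0 \<le> (B / A)\<^sup>2 * A - 2 * (B / A) * B + C"
      by (rule quadratic_nonneg)
    with \<open>0 < A\<close> have "B\<^sup>2 \<le> A * C"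
      by (simp add: power2_eq_square field_simps)
    then show ?thesis
      by (simp add: A_def B_def C_def)
  qed
qed

lemma inH_lin:
  assumes "inH f" and "inH g"
  shows "inH (\<lambda>x. a * f x + c * g x)"
  unfolding inH_def
proof
  show "(\<lambda>x. a * f x + c * g x) \<in> borel_measurable M01"
    using assms by (auto simp: inH_def)
  show "integrable M01 (\<lambda>x. (a * f x + c * g x)\<^sup>2)"
  proof (rule Bochner_Integration.integrable_bound)
    show "integrable M01 (\<lambda>x. 2 * a\<^sup>2 * (f x)\<^sup>2 + 2 * c\<^sup>2 * (g x)\<^sup>2)"
      using assms by (auto simp: inH_def)
    have "(a * f x + c * g x)\<^sup>2 \<le> 2 * a\<^sup>2 * (f x)\<^sup>2 + 2 * c\<^sup>2 * (g x)\<^sup>2" for x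
      using zero_le_power2[of "a * f x - c * g x"] by (simp add: power2_eq_square algebra_simps)
    then show "AE x in M01. norm ((a * f x + c * g x)\<^sup>2)
                 \<le> norm (2 * a\<^sup>2 * (f x)\<^sup>2 + 2 * c\<^sup>2 * (g x)\<^sup>2)"
      by (intro AE_I2) simp
  qed (use assms in \<open>auto simp: inH_def\<close>)
qed

lemma inH_add: "inH f \<Longrightarrow> inH g \<Longrightarrow> inH (\<lambda>x. f x + g x)"
  using inH_lin[of f g 1 1] by simp

lemma inH_diff: "inH f \<Longrightarrow> inH g \<Longrightarrow> inH (\<lambda>x. f x - g x)"
  using inH_lin[of f g 1 "-1"] by simp

lemma integrable_mult_inH:
  assumes "inH f" and "inH g"
  shows "integrable M01 (\<lambda>x. f x * g x)"
proof (rule Bochner_Integration.integrable_bound)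
  show "integrable M01 (\<lambda>x. (f x)\<^sup>2 + (g x)\<^sup>2)"
    using assms by (auto simp: inH_def)
  have "\<bar>f x * g x\<bar> \<le> (f x)\<^sup>2 + (g x)\<^sup>2" for x
  proof -
    have "2 * (\<bar>f x\<bar> * \<bar>g x\<bar>) \<le> (f x)\<^sup>2 + (g x)\<^sup>2"
      using zero_le_power2[of "\<bar>f x\<bar> - \<bar>g x\<bar>"] by (simp add: power2_eq_square algebra_simps)
    moreover have "0 \<le> \<bar>f x\<bar> * \<bar>g x\<bar>"
      by simp
    ultimately show ?thesis
      unfolding abs_mult by linarith
  qed
  then show "AE x in M01. norm (f x * g x) \<le> norm ((f x)\<^sup>2 + (g x)\<^sup>2)"
    by (intro AE_I2) simp
qed (use assms in \<open>auto simp: inH_def\<close>)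

lemma hnorm_nonneg: "0 \<le> hnorm f"
  by (simp add: hnorm_def)

lemma hnorm_sq: "(hnorm f)\<^sup>2 = integral\<^sup>L M01 (\<lambda>x. (f x)\<^sup>2)"
  using integral_nonneg_AE[of "\<lambda>x. (f x)\<^sup>2" M01] by (simp add: hnorm_def)

lemma hdist_self: "hdist f f = 0"
  by (simp add: hdist_def hnorm_def)

lemma hnorm_sq_le_hdist:
  assumes "inH f" and "inH a"
  shows "(hnorm f)\<^sup>2 \<le> 2 * (hdist f a)\<^sup>2 + 2 * (hnorm a)\<^sup>2"
proof -
  have int: "integrable M01 (\<lambda>x. (f x - a x)\<^sup>2)" "integrable M01 (\<lambda>x. (a x)\<^sup>2)"
    using assms inH_diff[OF assms] by (auto simp: inH_def)
  have "(hnorm f)\<^sup>2 \<le> integral\<^sup>L M01 (\<lambda>x. 2 * (f x - a x)\<^sup>2 + 2 * (a x)\<^sup>2)"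
    unfolding hnorm_sq
  proof (rule integral_mono)
    show "(f x)\<^sup>2 \<le> 2 * (f x - a x)\<^sup>2 + 2 * (a x)\<^sup>2" for x
      using zero_le_power2[of "f x - 2 * a x"] by (simp add: power2_eq_square algebra_simps)
  qed (use assms int in \<open>auto simp: inH_def\<close>)
  also have "\<dots> = 2 * (hdist f a)\<^sup>2 + 2 * (hnorm a)\<^sup>2"
    using int by (simp add: hdist_def hnorm_sq)
  finally show ?thesis .
qed

abbreviation sine_mode :: "nat \<Rightarrow> real \<Rightarrow> real" where
  "sine_mode j x \<equiv> sin (real (Suc j) * pi * x)"

lemma inH_sine_mode: "inH (sine_mode j)"
  unfolding inH_def
  by (auto intro!: continuous_imp_measurable_on_sets_lebesgue integrable_lebesgue_on_Icc_continuous
           continuous_intros)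

lemma integral_cos_int_pi:
  assumes "k \<in> \<int>" and "k \<noteq> 0"
  shows "integral\<^sup>L M01 (\<lambda>x. cos (k * pi * x)) = 0"
proof -
  have "((\<lambda>x. cos (k * pi * x)) has_integral sin (k * pi * 1) / (k * pi) - sin (k * pi * 0) / (k * pi))
          {0..1}"
  proof (rule fundamental_theorem_of_calculus)
    fix x :: real
    have "((\<lambda>x. sin (k * pi * x) / (k * pi)) has_real_derivative cos (k * pi * x)) (at x within {0..1})"
      using assms by (auto intro!: derivative_eq_intros)
    then show "((\<lambda>x. sin (k * pi * x) / (k * pi)) has_vector_derivative cos (k * pi * x))
                 (at x within {0..1})"
      by (simp add: has_real_derivative_iff_has_vector_derivative)
  qed simp
  moreover have "sin (k * pi) = 0"
    using assms(1) by (simp add: sin_times_pi_eq_0)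
  ultimately have "((\<lambda>x. cos (k * pi * x)) has_integral 0) {0..1}"
    by simp
  then show ?thesis
    using lebesgue_integral_eq_integral[OF integrable_lebesgue_on_Icc_continuous]
    by (simp add: integral_unique continuous_intros)
qed

lemma sine_mode_orthogonal:
  "integral\<^sup>L M01 (\<lambda>x. sine_mode i x * sine_mode j x) = (if i = j then 1/2 else 0)"
proof -
  define p where "p = real (Suc i) - real (Suc j)"
  define m where "m = real (Suc i) + real (Suc j)"
  have "(\<lambda>x. sine_mode i x * sine_mode j x) = (\<lambda>x. (cos (p * pi * x) - cos (m * pi * x)) / 2)"
    by (auto simp: p_def m_def sin_times_sin algebra_simps)
  moreover have "integral\<^sup>L M01 (\<lambda>x. cos (m * pi * x)) = 0"
    by (rule integral_cos_int_pi) (auto simp: m_def)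
  moreover have "integral\<^sup>L M01 (\<lambda>x. cos (p * pi * x)) = (if i = j then 1 else 0)"
    by (auto simp: p_def m_def measure_restrict_space intro!: integral_cos_int_pi)
  moreover have "integrable M01 (\<lambda>x. cos (c * pi * x))" for c
    by (intro integrable_lebesgue_on_Icc_continuous continuous_intros)
  ultimately show ?thesis
    by simp
qed

lemma coef_Bessel_inequality:
  assumes f: "inH f"
  shows "(\<Sum>j<N. (coef f j)\<^sup>2) \<le> (hnorm f)\<^sup>2"
proof -
  define c where "c j = coef f j" for j
  define S where "S x = (\<Sum>j<N. c j * sqrt 2 * sine_mode j x)" for x
  have int_f: "integrable M01 (\<lambda>x. f x * sine_mode j x)" for j
    using integrable_mult_inH[OF f inH_sine_mode] .
  have int_modes: "integrable M01 (\<lambda>x. sine_mode i x * sine_mode j x)" for i j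
    by (intro integrable_lebesgue_on_Icc_continuous continuous_intros)
  have fS: "(\<lambda>x. f x * S x) = (\<lambda>x. \<Sum>j<N. c j * sqrt 2 * (f x * sine_mode j x))"
    by (auto simp: S_def sum_distrib_left algebra_simps)
  have SS: "(\<lambda>x. (S x)\<^sup>2) = (\<lambda>x. \<Sum>i<N. \<Sum>j<N. 2 * c i * c j * (sine_mode i x * sine_mode j x))"
    by (auto simp: S_def power2_eq_square sum_product algebra_simps intro!: sum.cong)
  have int_fS: "integrable M01 (\<lambda>x. f x * S x)"
    unfolding fS using int_f by simp
  have int_SS: "integrable M01 (\<lambda>x. (S x)\<^sup>2)"
    unfolding SS using int_modes by simp
  have "integral\<^sup>L M01 (\<lambda>x. f x * S x) = (\<Sum>j<N. c j * sqrt 2 * integral\<^sup>L M01 (\<lambda>x. f x * sine_mode j x))"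
    unfolding fS using int_f by simp
  also have "\<dots> = (\<Sum>j<N. (c j)\<^sup>2)"
    by (simp add: c_def coef_def power2_eq_square ac_simps)
  finally have integral_fS: "integral\<^sup>L M01 (\<lambda>x. f x * S x) = (\<Sum>j<N. (c j)\<^sup>2)" .
  have "integral\<^sup>L M01 (\<lambda>x. (S x)\<^sup>2)
          = (\<Sum>i<N. \<Sum>j<N. 2 * c i * c j * integral\<^sup>L M01 (\<lambda>x. sine_mode i x * sine_mode j x))"
    unfolding SS using int_modes by simp
  also have "\<dots> = (\<Sum>j<N. (c j)\<^sup>2)"
    unfolding sine_mode_orthogonal by (simp add: power2_eq_square if_distrib sum.delta cong: if_cong)
  finally have integral_SS: "integral\<^sup>L M01 (\<lambda>x. (S x)\<^sup>2) = (\<Sum>j<N. (c j)\<^sup>2)" .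
  have "0 \<le> integral\<^sup>L M01 (\<lambda>x. (f x - S x)\<^sup>2)"
    by (rule integral_nonneg_AE) auto
  also have "(\<lambda>x. (f x - S x)\<^sup>2) = (\<lambda>x. (f x)\<^sup>2 - 2 * (f x * S x) + (S x)\<^sup>2)"
    by (auto simp: power2_eq_square algebra_simps)
  also have "integral\<^sup>L M01 \<dots> = (hnorm f)\<^sup>2 - (\<Sum>j<N. (c j)\<^sup>2)"
    using f int_fS int_SS integral_fS integral_SS by (simp add: inH_def hnorm_sq)
  finally show ?thesis
    by (simp add: c_def)
qed

lemma coef_sq_le_hnorm_sq: "inH f \<Longrightarrow> (coef f j)\<^sup>2 \<le> (hnorm f)\<^sup>2"
  using coef_Bessel_inequality[of f "Suc j"] sum_nonneg[of "{..<j}" "\<lambda>i. (coef f i)\<^sup>2"] by simp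

lemma coef_lin:
  assumes "inH f" and "inH g"
  shows "coef (\<lambda>x. a * f x + c * g x) j = a * coef f j + c * coef g j"
proof -
  have "(\<lambda>x. (a * f x + c * g x) * sine_mode j x)
          = (\<lambda>x. a * (f x * sine_mode j x) + c * (g x * sine_mode j x))"
    by (auto simp: algebra_simps)
  then show ?thesis
    using integrable_mult_inH[OF assms(1) inH_sine_mode] integrable_mult_inH[OF assms(2) inH_sine_mode]
    by (simp add: coef_def algebra_simps)
qed

lemma coef_add: "inH f \<Longrightarrow> inH g \<Longrightarrow> coef (\<lambda>x. f x + g x) j = coef f j + coef g j"
  using coef_lin[of f g 1 1 j] by simp

lemma coef_diff: "inH f \<Longrightarrow> inH g \<Longrightarrow> coef (\<lambda>x. f x - g x) j = coef f j - coef g j"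
  using coef_lin[of f g 1 "-1" j] by simp

lemma abs_coef_diff_le_hdist:
  assumes "inH f" and "inH g"
  shows "\<bar>coef f j - coef g j\<bar> \<le> hdist f g"
  using coef_sq_le_hnorm_sq[OF inH_diff[OF assms], of j]
  by (metis abs_le_square_iff abs_of_nonneg coef_diff[OF assms] hdist_def hnorm_nonneg)

lemma coef_eq_if_hdist_eq_0: "inH f \<Longrightarrow> inH g \<Longrightarrow> hdist f g = 0 \<Longrightarrow> coef f j = coef g j"
  using abs_coef_diff_le_hdist[of f g j] by simp

section \<open>Absolutely continuous functions\<close>

(* The unqualified name content refers to the content of a polynomial. *)
abbreviation ivl_content :: "real set \<Rightarrow> real" where
  "ivl_content \<equiv> Henstock_Kurzweil_Integration.content"

definition absolutely_continuous_on :: "real set \<Rightarrow> (real \<Rightarrow> real) \<Rightarrow> bool" where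
  "absolutely_continuous_on S \<phi> \<longleftrightarrow>
     (\<forall>e>0. \<exists>d>0. \<forall>D. D division_of \<Union>D \<and> \<Union>D \<subseteq> S \<and> sum ivl_content D < d
        \<longrightarrow> (\<Sum>K\<in>D. \<bar>\<phi> (Sup K) - \<phi> (Inf K)\<bar>) < e)"

lemma absolutely_continuous_onE:
  assumes "absolutely_continuous_on S \<phi>" and "0 < e"
  obtains d where "0 < d"
    and "\<And>D. D division_of \<Union>D \<Longrightarrow> \<Union>D \<subseteq> S \<Longrightarrow> sum ivl_content D < d
           \<Longrightarrow> (\<Sum>K\<in>D. \<bar>\<phi> (Sup K) - \<phi> (Inf K)\<bar>) < e"
  using assms unfolding absolutely_continuous_on_def by meson

lemma division_of_realE:
  fixes D :: "real set set"
  assumes "D division_of S" and "K \<in> D"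
  obtains \<alpha> \<beta> where "K = {\<alpha>..\<beta>}" and "\<alpha> \<le> \<beta>"
proof -
  obtain \<alpha> \<beta> where K: "K = {\<alpha>..\<beta>}"
    using division_ofD(4)[OF assms] cbox_interval by blast
  moreover have "\<alpha> \<le> \<beta>"
    using division_ofD(3)[OF assms] K by auto
  ultimately show ?thesis
    by (rule that)
qed

lemma absolutely_continuous_on_lipschitz:
  assumes lip: "\<And>s t. s \<in> {a..b} \<Longrightarrow> t \<in> {a..b} \<Longrightarrow> \<bar>\<phi> t - \<phi> s\<bar> \<le> L * \<bar>t - s\<bar>"
    and "0 \<le> L"
  shows "absolutely_continuous_on {a..b} \<phi>"
  unfolding absolutely_continuous_on_def
proof (intro allI impI)
  fix e :: real
  assume "0 < e"
  have "(\<Sum>K\<in>D. \<bar>\<phi> (Sup K) - \<phi> (Inf K)\<bar>) < e"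
    if D: "D division_of \<Union>D" "\<Union>D \<subseteq> {a..b}" "sum ivl_content D < e / (L + 1)" for D
  proof -
    have "\<bar>\<phi> (Sup K) - \<phi> (Inf K)\<bar> \<le> L * ivl_content K" if "K \<in> D" for K
    proof -
      obtain \<alpha> \<beta> where K: "K = {\<alpha>..\<beta>}" "\<alpha> \<le> \<beta>"
        using division_of_realE[OF D(1) \<open>K \<in> D\<close>] .
      moreover have "K \<subseteq> {a..b}"
        using Union_upper[OF \<open>K \<in> D\<close>] D(2) by (rule order_trans)
      ultimately have "\<alpha> \<in> {a..b}" "\<beta> \<in> {a..b}"
        by auto
      then show ?thesis
        using lip[of \<alpha> \<beta>] K by simp
    qed
    then have "(\<Sum>K\<in>D. \<bar>\<phi> (Sup K) - \<phi> (Inf K)\<bar>) \<le> L * sum ivl_content D"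
      by (simp add: sum_distrib_left sum_mono)
    also have "\<dots> \<le> L * (e / (L + 1))"
      using D(3) \<open>0 \<le> L\<close> by (intro mult_left_mono) auto
    also have "\<dots> < e"
      using \<open>0 < e\<close> \<open>0 \<le> L\<close> by (simp add: field_simps)
    finally show ?thesis .
  qed
  moreover have "0 < e / (L + 1)"
    using \<open>0 < e\<close> \<open>0 \<le> L\<close> by simp
  ultimately show "\<exists>d>0. \<forall>D. D division_of \<Union>D \<and> \<Union>D \<subseteq> {a..b} \<and> sum ivl_content D < d
                     \<longrightarrow> (\<Sum>K\<in>D. \<bar>\<phi> (Sup K) - \<phi> (Inf K)\<bar>) < e"
    by meson
qed

lemma absolutely_continuous_on_mult:
  assumes "a \<le> b" and f: "absolutely_continuous_on {a..b} f" and g: "absolutely_continuous_on {a..b} g"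
    and Bf: "\<And>t. t \<in> {a..b} \<Longrightarrow> \<bar>f t\<bar> \<le> Bf" and Bg: "\<And>t. t \<in> {a..b} \<Longrightarrow> \<bar>g t\<bar> \<le> Bg"
  shows "absolutely_continuous_on {a..b} (\<lambda>t. f t * g t)"
  unfolding absolutely_continuous_on_def
proof (intro allI impI)
  fix e :: real
  assume "0 < e"
  have "0 \<le> Bf" "0 \<le> Bg"
    using Bf[of a] Bg[of a] \<open>a \<le> b\<close> by auto
  have "0 < e / (2 * (Bg + 1))" "0 < e / (2 * (Bf + 1))"
    using \<open>0 < e\<close> \<open>0 \<le> Bf\<close> \<open>0 \<le> Bg\<close> by simp_all
  obtain df where "0 < df"
    and df: "\<And>D. D division_of \<Union>D \<Longrightarrow> \<Union>D \<subseteq> {a..b} \<Longrightarrow> sum ivl_content D < df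
      \<Longrightarrow> (\<Sum>K\<in>D. \<bar>f (Sup K) - f (Inf K)\<bar>) < e / (2 * (Bg + 1))"
    by (rule absolutely_continuous_onE[OF f \<open>0 < e / (2 * (Bg + 1))\<close>]) (rule that)
  obtain dg where "0 < dg"
    and dg: "\<And>D. D division_of \<Union>D \<Longrightarrow> \<Union>D \<subseteq> {a..b} \<Longrightarrow> sum ivl_content D < dg
      \<Longrightarrow> (\<Sum>K\<in>D. \<bar>g (Sup K) - g (Inf K)\<bar>) < e / (2 * (Bf + 1))"
    by (rule absolutely_continuous_onE[OF g \<open>0 < e / (2 * (Bf + 1))\<close>]) (rule that)
  have "(\<Sum>K\<in>D. \<bar>f (Sup K) * g (Sup K) - f (Inf K) * g (Inf K)\<bar>) < e"
    if D: "D division_of \<Union>D" "\<Union>D \<subseteq> {a..b}" "sum ivl_content D < min df dg" for D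
  proof -
    have "\<bar>f (Sup K) * g (Sup K) - f (Inf K) * g (Inf K)\<bar>
            \<le> Bg * \<bar>f (Sup K) - f (Inf K)\<bar> + Bf * \<bar>g (Sup K) - g (Inf K)\<bar>" if "K \<in> D" for K
    proof -
      obtain \<alpha> \<beta> where K: "K = {\<alpha>..\<beta>}" "\<alpha> \<le> \<beta>"
        using division_of_realE[OF D(1) \<open>K \<in> D\<close>] .
      moreover have "K \<subseteq> {a..b}"
        using Union_upper[OF \<open>K \<in> D\<close>] D(2) by (rule order_trans)
      ultimately have ab: "\<alpha> \<in> {a..b}" "\<beta> \<in> {a..b}"
        by auto
      have "f \<beta> * g \<beta> - f \<alpha> * g \<alpha> = g \<beta> * (f \<beta> - f \<alpha>) + f \<alpha> * (g \<beta> - g \<alpha>)"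
        by (simp add: algebra_simps)
      then have "\<bar>f \<beta> * g \<beta> - f \<alpha> * g \<alpha>\<bar> \<le> \<bar>g \<beta>\<bar> * \<bar>f \<beta> - f \<alpha>\<bar> + \<bar>f \<alpha>\<bar> * \<bar>g \<beta> - g \<alpha>\<bar>"
        by (simp add: abs_mult[symmetric] abs_triangle_ineq)
      also have "\<dots> \<le> Bg * \<bar>f \<beta> - f \<alpha>\<bar> + Bf * \<bar>g \<beta> - g \<alpha>\<bar>"
        using Bf[OF ab(1)] Bg[OF ab(2)] by (intro add_mono mult_right_mono) auto
      finally show ?thesis
        using K by simp
    qed
    then have "(\<Sum>K\<in>D. \<bar>f (Sup K) * g (Sup K) - f (Inf K) * g (Inf K)\<bar>)
        \<le> Bg * (\<Sum>K\<in>D. \<bar>f (Sup K) - f (Inf K)\<bar>) + Bf * (\<Sum>K\<in>D. \<bar>g (Sup K) - g (Inf K)\<bar>)"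
      unfolding sum_distrib_left sum.distrib[symmetric] by (rule sum_mono)
    also have "\<dots> \<le> Bg * (e / (2 * (Bg + 1))) + Bf * (e / (2 * (Bf + 1)))"
      using df[OF D(1,2)] dg[OF D(1,2)] D(3) \<open>0 \<le> Bf\<close> \<open>0 \<le> Bg\<close>
      by (intro add_mono mult_left_mono) auto
    also have "\<dots> < e"
    proof -
      have "Bg * (e / (2 * (Bg + 1))) < e / 2" "Bf * (e / (2 * (Bf + 1))) < e / 2"
        using \<open>0 < e\<close> \<open>0 \<le> Bf\<close> \<open>0 \<le> Bg\<close> by (simp_all add: field_simps)
      then show ?thesis
        by linarith
    qed
    finally show ?thesis .
  qed
  then show "\<exists>d>0. \<forall>D. D division_of \<Union>D \<and> \<Union>D \<subseteq> {a..b} \<and> sum ivl_content D < d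
               \<longrightarrow> (\<Sum>K\<in>D. \<bar>f (Sup K) * g (Sup K) - f (Inf K) * g (Inf K)\<bar>) < e"
    using \<open>0 < df\<close> \<open>0 < dg\<close> by (intro exI[of _ "min df dg"]) auto
qed

lemma negligible_outer_open:
  fixes N :: "'a::euclidean_space set"
  assumes "negligible N" and "0 < e"
  obtains U where "open U" and "N \<subseteq> U" and "U \<in> lmeasurable" and "measure lebesgue U < e"
proof -
  obtain U where U: "open U" "N \<subseteq> U" "U - N \<in> lmeasurable" "emeasure lebesgue (U - N) < ennreal e"
    using sets_lebesgue_outer_open[OF negligible_imp_sets[OF assms(1)] assms(2)] by blast
  have U_eq: "U = (U - N) \<union> N"
    using U(2) by blast
  have "U \<in> lmeasurable"
    using fmeasurable.Un[OF U(3) negligible_imp_measurable[OF assms(1)]] U_eq by simp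
  moreover have "measure lebesgue U < e"
  proof -
    have "measure lebesgue U \<le> measure lebesgue (U - N) + measure lebesgue N"
      using U(3) negligible_imp_sets[OF assms(1)] U_eq by (metis measure_Un_le fmeasurable_def mem_Collect_eq)
    moreover have "measure lebesgue N = 0"
      using assms(1) by (rule negligible_imp_measure0)
    moreover have "measure lebesgue (U - N) < e"
      using U(3,4) assms(2) by (simp add: emeasure_eq_measure2 ennreal_less_iff)
    ultimately show ?thesis
      by linarith
  qed
  ultimately show ?thesis
    using U(1,2) that by blast
qed

lemma absolutely_continuous_on_tagged_partial_division:
  assumes ac: "absolutely_continuous_on {a..b} \<phi>" and "0 < e"
  obtains d where "0 < d"
    and "\<And>p U. p tagged_partial_division_of {a..b} \<Longrightarrow> \<Union>(snd ` p) \<subseteq> U \<Longrightarrow> U \<in> lmeasurable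
           \<Longrightarrow> measure lebesgue U < d \<Longrightarrow> (\<Sum>(x, K)\<in>p. \<bar>\<phi> (Sup K) - \<phi> (Inf K)\<bar>) < e"
proof -
  obtain d where "0 < d" and d: "\<And>D. D division_of \<Union>D \<Longrightarrow> \<Union>D \<subseteq> {a..b} \<Longrightarrow> sum ivl_content D < d
                     \<Longrightarrow> (\<Sum>K\<in>D. \<bar>\<phi> (Sup K) - \<phi> (Inf K)\<bar>) < e"
    by (rule absolutely_continuous_onE[OF ac \<open>0 < e\<close>]) (rule that)
  have "(\<Sum>(x, K)\<in>p. \<bar>\<phi> (Sup K) - \<phi> (Inf K)\<bar>) < e"
    if p: "p tagged_partial_division_of {a..b}" and U: "\<Union>(snd ` p) \<subseteq> U" "U \<in> lmeasurable"
      "measure lebesgue U < d" for p U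
  proof -
    \<comment> \<open>the empty interval must count 0, but \<open>Sup {} - Inf {}\<close> is unspecified\<close>
    define jump where "jump K = (if K = {} then 0 else \<bar>\<phi> (Sup K) - \<phi> (Inf K)\<bar>)" for K :: "real set"
    have D: "snd ` p division_of \<Union>(snd ` p)"
      by (rule partial_division_of_tagged_division[OF p])
    have nonempty: "K \<noteq> {}" if "(x, K) \<in> p" for x K
      using tagged_partial_division_ofD(2)[OF p that] by blast
    have "(\<Sum>(x, K)\<in>p. \<bar>\<phi> (Sup K) - \<phi> (Inf K)\<bar>) = (\<Sum>(x, K)\<in>p. jump K)"
      using nonempty by (intro sum.cong) (auto simp: jump_def)
    also have "\<dots> = sum jump (snd ` p)"
    proof (rule sum.over_tagged_division_lemma[OF tagged_partial_division_of_Union_self[OF p]])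
      show "jump (cbox u v) = 0" if "box u v = {}" for u v :: real
        using that by (cases "v < u") (auto simp: jump_def)
    qed
    also have "\<dots> = (\<Sum>K\<in>snd ` p. \<bar>\<phi> (Sup K) - \<phi> (Inf K)\<bar>)"
      using nonempty by (intro sum.cong) (auto simp: jump_def)
    also have "\<dots> < e"
    proof (rule d[OF D])
      show "\<Union>(snd ` p) \<subseteq> {a..b}"
        using tagged_partial_division_ofD(3)[OF p] by force
      have "sum ivl_content (snd ` p) = sum (measure lebesgue) (snd ` p)"
      proof (rule sum.cong[OF refl])
        fix K
        assume "K \<in> snd ` p"
        then obtain u v where "K = cbox u v"
          using division_ofD(4)[OF D] by blast
        then show "ivl_content K = measure lebesgue K"
          by (simp add: measure_completion)
      qed
      also have "\<dots> = measure lebesgue (\<Union>(snd ` p))"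
        by (rule content_division[OF D])
      also have "\<dots> \<le> measure lebesgue U"
        by (rule measure_mono_fmeasurable[OF U(1)]) (use lmeasurable_division[OF D] U(2) in auto)
      finally show "sum ivl_content (snd ` p) < d"
        using U(3) by linarith
    qed
    finally show ?thesis .
  qed
  with \<open>0 < d\<close> show ?thesis
    by (rule that)
qed

lemma derivative_gauge:
  fixes \<phi> f :: "real \<Rightarrow> real"
  assumes "open U" and "N \<subseteq> U" and "0 < \<epsilon>"
    and der: "\<And>t. t \<in> {a..b} - N \<Longrightarrow> (\<phi> has_real_derivative f t) (at t within {a..b})"
  obtains \<gamma> where "gauge \<gamma>" and "\<And>t. t \<in> N \<Longrightarrow> \<gamma> t \<subseteq> U"
    and "\<And>t y. t \<in> {a..b} - N \<Longrightarrow> y \<in> {a..b} \<inter> \<gamma> t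
           \<Longrightarrow> \<bar>\<phi> y - \<phi> t - f t * (y - t)\<bar> \<le> \<epsilon> * \<bar>y - t\<bar>"
proof -
  have "\<exists>\<delta>>0. (t \<in> N \<longrightarrow> ball t \<delta> \<subseteq> U) \<and>
          (t \<in> {a..b} - N \<longrightarrow> (\<forall>y\<in>{a..b}. \<bar>y - t\<bar> < \<delta> \<longrightarrow> \<bar>\<phi> y - \<phi> t - f t * (y - t)\<bar> \<le> \<epsilon> * \<bar>y - t\<bar>))"
    for t
  proof (cases "t \<in> N")
    case True
    then obtain \<delta> where "0 < \<delta>" "ball t \<delta> \<subseteq> U"
      using assms(1,2) open_contains_ball by blast
    with True show ?thesis
      by blast
  next
    case False
    show ?thesis
    proof (cases "t \<in> {a..b}")
      case True
      with False have "(\<phi> has_derivative (\<lambda>h. f t * h)) (at t within {a..b})"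
        using der by (simp add: has_field_derivative_def)
      then obtain \<delta> where "0 < \<delta>"
        and "\<forall>y\<in>{a..b}. norm (y - t) < \<delta> \<longrightarrow> norm (\<phi> y - \<phi> t - f t * (y - t)) \<le> \<epsilon> * norm (y - t)"
        using \<open>0 < \<epsilon>\<close> unfolding has_derivative_within_alt by blast
      with False show ?thesis
        by auto
    qed (use False in \<open>intro exI[of _ 1], auto\<close>)
  qed
  then obtain \<delta> where \<delta>: "\<And>t. 0 < \<delta> t" and "\<And>t. t \<in> N \<Longrightarrow> ball t (\<delta> t) \<subseteq> U"
    and "\<And>t y. t \<in> {a..b} - N \<Longrightarrow> y \<in> {a..b} \<Longrightarrow> \<bar>y - t\<bar> < \<delta> t
           \<Longrightarrow> \<bar>\<phi> y - \<phi> t - f t * (y - t)\<bar> \<le> \<epsilon> * \<bar>y - t\<bar>"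
    by metis
  moreover have "gauge (\<lambda>t. ball t (\<delta> t))"
    using \<delta> by (auto simp: gauge_def)
  ultimately show ?thesis
    using that[of "\<lambda>t. ball t (\<delta> t)"] by (auto simp: dist_real_def abs_minus_commute)
qed

lemma tagged_division_derivative_sum_le:
  fixes \<phi> f :: "real \<Rightarrow> real"
  assumes p: "p tagged_partial_division_of S"
    and approx: "\<And>x K y. (x, K) \<in> p \<Longrightarrow> y \<in> K \<Longrightarrow> \<bar>\<phi> y - \<phi> x - f x * (y - x)\<bar> \<le> \<epsilon> * \<bar>y - x\<bar>"
  shows "(\<Sum>(x, K)\<in>p. \<bar>ivl_content K * f x - (\<phi> (Sup K) - \<phi> (Inf K))\<bar>) \<le> \<epsilon> * (\<Sum>(x, K)\<in>p. ivl_content K)"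
  unfolding sum_distrib_left
proof (rule sum_mono, clarify)
  fix x K
  assume xK: "(x, K) \<in> p"
  obtain u v where K: "K = cbox u v"
    using tagged_partial_division_ofD(4)[OF p xK] by blast
  have "x \<in> K"
    using tagged_partial_division_ofD(2)[OF p xK] .
  with K have uv: "u \<le> x" "x \<le> v"
    by auto
  have "ivl_content K * f x - (\<phi> (Sup K) - \<phi> (Inf K))
          = (\<phi> u - \<phi> x - f x * (u - x)) - (\<phi> v - \<phi> x - f x * (v - x))"
    using uv K by (simp add: algebra_simps)
  also have "\<bar>\<dots>\<bar> \<le> \<epsilon> * \<bar>u - x\<bar> + \<epsilon> * \<bar>v - x\<bar>"
    using approx[OF xK, of u] approx[OF xK, of v] uv K by (intro abs_triangle_ineq4[THEN order_trans]) auto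
  also have "\<dots> = \<epsilon> * ivl_content K"
    using uv K by (simp add: algebra_simps)
  finally show "\<bar>ivl_content K * f x - (\<phi> (Sup K) - \<phi> (Inf K))\<bar> \<le> \<epsilon> * ivl_content K" .
qed

lemma tagged_division_Riemann_sum_le:
  fixes \<phi> f :: "real \<Rightarrow> real"
  assumes "a \<le> b" and "0 \<le> \<epsilon>" and p: "p tagged_division_of {a..b}"
    and approx: "\<And>x K y. (x, K) \<in> p \<Longrightarrow> x \<notin> N \<Longrightarrow> y \<in> K
                   \<Longrightarrow> \<bar>\<phi> y - \<phi> x - f x * (y - x)\<bar> \<le> \<epsilon> * \<bar>y - x\<bar>"
  shows "\<bar>(\<Sum>(x, K)\<in>p. ivl_content K * (if x \<in> N then 0 else f x)) - (\<phi> b - \<phi> a)\<bar>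
           \<le> \<epsilon> * (b - a) + (\<Sum>(x, K)\<in>{xK \<in> p. fst xK \<in> N}. \<bar>\<phi> (Sup K) - \<phi> (Inf K)\<bar>)"
proof -
  define p1 where "p1 = {xK \<in> p. fst xK \<notin> N}"
  define p2 where "p2 = {xK \<in> p. fst xK \<in> N}"
  define T where "T = (\<lambda>(x, K). ivl_content K * (if x \<in> N then 0 else f x) - (\<phi> (Sup K) - \<phi> (Inf K)))"
  have p_part: "p tagged_partial_division_of {a..b}"
    using p by (simp add: tagged_division_of_def)
  then have "finite p"
    by (rule tagged_partial_division_ofD(1))
  have "sum (\<lambda>(x, K). \<phi> (Sup K) - \<phi> (Inf K)) p = \<phi> b - \<phi> a"
    using additive_tagged_division_1[OF \<open>a \<le> b\<close>] p by simp
  then have "(\<Sum>(x, K)\<in>p. ivl_content K * (if x \<in> N then 0 else f x)) - (\<phi> b - \<phi> a) = sum T p"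
    by (simp add: T_def sum_subtractf split_def)
  also have "\<dots> = sum T p1 + sum T p2"
    using \<open>finite p\<close> by (subst sum.union_disjoint[symmetric]) (auto simp: p1_def p2_def intro: sum.cong)
  finally have "\<bar>(\<Sum>(x, K)\<in>p. ivl_content K * (if x \<in> N then 0 else f x)) - (\<phi> b - \<phi> a)\<bar>
                  \<le> sum (\<lambda>xK. \<bar>T xK\<bar>) p1 + sum (\<lambda>xK. \<bar>T xK\<bar>) p2"
    using abs_triangle_ineq[of "sum T p1" "sum T p2"] sum_abs[of T p1] sum_abs[of T p2] by linarith
  also have "sum (\<lambda>xK. \<bar>T xK\<bar>) p1 = (\<Sum>(x, K)\<in>p1. \<bar>ivl_content K * f x - (\<phi> (Sup K) - \<phi> (Inf K))\<bar>)"
    by (intro sum.cong) (auto simp: T_def p1_def)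
  also have "\<dots> \<le> \<epsilon> * (\<Sum>(x, K)\<in>p1. ivl_content K)"
    by (rule tagged_division_derivative_sum_le[OF tagged_partial_division_subset[OF p_part]])
       (auto simp: p1_def intro: approx)
  also have "\<dots> \<le> \<epsilon> * (b - a)"
  proof -
    have "(\<Sum>(x, K)\<in>p1. ivl_content K) \<le> (\<Sum>(x, K)\<in>p. ivl_content K)"
      using \<open>finite p\<close> by (intro sum_mono2) (auto simp: p1_def)
    also have "\<dots> = b - a"
      using additive_content_tagged_division[of p a b] p \<open>a \<le> b\<close> by simp
    finally show ?thesis
      using \<open>0 \<le> \<epsilon>\<close> by (rule mult_left_mono)
  qed
  also have "sum (\<lambda>xK. \<bar>T xK\<bar>) p2 = (\<Sum>(x, K)\<in>p2. \<bar>\<phi> (Sup K) - \<phi> (Inf K)\<bar>)"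
    by (intro sum.cong) (auto simp: T_def p2_def abs_minus_commute)
  finally show ?thesis
    by (simp add: p2_def)
qed

(* At tags outside N the derivative controls the Riemann sum; the intervals tagged in N lie in
   an open set of small measure around N, where absolute continuity controls the increments. *)
theorem fundamental_theorem_of_calculus_absolutely_continuous:
  fixes \<phi> f :: "real \<Rightarrow> real"
  assumes "a \<le> b" and ac: "absolutely_continuous_on {a..b} \<phi>" and N: "negligible N"
    and der: "\<And>t. t \<in> {a..b} - N \<Longrightarrow> (\<phi> has_real_derivative f t) (at t within {a..b})"
  shows "(f has_integral \<phi> b - \<phi> a) {a..b}"
proof -
  define g where "g t = (if t \<in> N then 0 else f t)" for t
  have "(g has_integral \<phi> b - \<phi> a) (cbox a b)"
    unfolding has_integral
  proof (intro allI impI)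
    fix e :: real
    assume "0 < e"
    define \<epsilon> where "\<epsilon> = e / (2 * (b - a + 1))"
    have "0 < \<epsilon>" and \<epsilon>: "\<epsilon> * (b - a) < e / 2"
      using \<open>0 < e\<close> \<open>a \<le> b\<close> by (auto simp: \<epsilon>_def field_simps)
    obtain d where "0 < d" and d: "\<And>p U. p tagged_partial_division_of {a..b} \<Longrightarrow> \<Union>(snd ` p) \<subseteq> U
        \<Longrightarrow> U \<in> lmeasurable \<Longrightarrow> measure lebesgue U < d
        \<Longrightarrow> (\<Sum>(x, K)\<in>p. \<bar>\<phi> (Sup K) - \<phi> (Inf K)\<bar>) < e / 2"
      by (rule absolutely_continuous_on_tagged_partial_division[OF ac, of "e / 2"])
         (use \<open>0 < e\<close> in auto)
    obtain U where "open U" "N \<subseteq> U" "U \<in> lmeasurable" "measure lebesgue U < d"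
      by (rule negligible_outer_open[OF N \<open>0 < d\<close>])
    obtain \<gamma> where "gauge \<gamma>" and \<gamma>N: "\<And>t. t \<in> N \<Longrightarrow> \<gamma> t \<subseteq> U"
      and \<gamma>der: "\<And>t y. t \<in> {a..b} - N \<Longrightarrow> y \<in> {a..b} \<inter> \<gamma> t
                   \<Longrightarrow> \<bar>\<phi> y - \<phi> t - f t * (y - t)\<bar> \<le> \<epsilon> * \<bar>y - t\<bar>"
      by (rule derivative_gauge[OF \<open>open U\<close> \<open>N \<subseteq> U\<close> \<open>0 < \<epsilon>\<close> der]) (assumption | rule that)+
    have "\<bar>(\<Sum>(x, K)\<in>p. ivl_content K * g x) - (\<phi> b - \<phi> a)\<bar> < e"
      if p: "p tagged_division_of {a..b}" and fine: "\<gamma> fine p" for p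
    proof -
      have "\<bar>(\<Sum>(x, K)\<in>p. ivl_content K * g x) - (\<phi> b - \<phi> a)\<bar>
              \<le> \<epsilon> * (b - a) + (\<Sum>(x, K)\<in>{xK \<in> p. fst xK \<in> N}. \<bar>\<phi> (Sup K) - \<phi> (Inf K)\<bar>)"
        unfolding g_def
      proof (rule tagged_division_Riemann_sum_le[OF \<open>a \<le> b\<close> _ p])
        show "\<bar>\<phi> y - \<phi> x - f x * (y - x)\<bar> \<le> \<epsilon> * \<bar>y - x\<bar>" if "(x, K) \<in> p" "x \<notin> N" "y \<in> K" for x K y
        proof -
          have "K \<subseteq> \<gamma> x"
            using fine that(1) by (auto simp: fine_def)
          moreover have "x \<in> K" "K \<subseteq> {a..b}"
            using tagged_division_ofD(2,3)[OF p that(1)] .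
          ultimately show ?thesis
            using \<gamma>der[of x y] that(2,3) by blast
        qed
      qed (use \<open>0 < \<epsilon>\<close> in simp)
      also have "(\<Sum>(x, K)\<in>{xK \<in> p. fst xK \<in> N}. \<bar>\<phi> (Sup K) - \<phi> (Inf K)\<bar>) < e / 2"
      proof (rule d)
        show "{xK \<in> p. fst xK \<in> N} tagged_partial_division_of {a..b}"
          using p by (auto simp: tagged_division_of_def intro: tagged_partial_division_subset)
        show "\<Union>(snd ` {xK \<in> p. fst xK \<in> N}) \<subseteq> U"
          using fine \<gamma>N by (force simp: fine_def)
      qed fact+
      finally show ?thesis
        using \<epsilon> by linarith
    qed
    then show "\<exists>\<gamma>. gauge \<gamma> \<and> (\<forall>p. p tagged_division_of cbox a b \<and> \<gamma> fine p \<longrightarrow>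
        norm ((\<Sum>(x, K)\<in>p. ivl_content K *\<^sub>R g x) - (\<phi> b - \<phi> a)) < e)"
      using \<open>gauge \<gamma>\<close> by (intro exI[of _ \<gamma>]) simp
  qed
  then have g_int: "(g has_integral \<phi> b - \<phi> a) {a..b}"
    by simp
  show ?thesis
    using has_integral_spike[OF N _ g_int, of f] by (simp add: g_def)
qed

lemma division_of_real_separated:
  fixes D :: "real set set"
  assumes D: "D division_of S" and "K \<in> D" and "L \<in> D" and "K \<noteq> L"
    and "Inf K < Sup K" and "Inf L < Sup L"
  shows "Sup K \<le> Inf L \<or> Sup L \<le> Inf K"
proof (rule ccontr)
  obtain \<alpha> \<beta> where K: "K = {\<alpha>..\<beta>}" "\<alpha> \<le> \<beta>"
    using division_of_realE[OF D \<open>K \<in> D\<close>] .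
  obtain \<alpha>' \<beta>' where L: "L = {\<alpha>'..\<beta>'}" "\<alpha>' \<le> \<beta>'"
    using division_of_realE[OF D \<open>L \<in> D\<close>] .
  assume "\<not> (Sup K \<le> Inf L \<or> Sup L \<le> Inf K)"
  then have "\<alpha>' < \<beta>" "\<alpha> < \<beta>'" "\<alpha> < \<beta>" "\<alpha>' < \<beta>'"
    using K L \<open>Inf K < Sup K\<close> \<open>Inf L < Sup L\<close> by auto
  then have "(max \<alpha> \<alpha>' + min \<beta> \<beta>') / 2 \<in> interior K \<inter> interior L"
    using K L by auto
  moreover have "interior K \<inter> interior L = {}"
    using division_ofD(5)[OF D \<open>K \<in> D\<close> \<open>L \<in> D\<close> \<open>K \<noteq> L\<close>] .
  ultimately show False
    by simp
qed

lemma division_of_real_enumerate: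
  fixes D :: "real set set"
  assumes D: "D division_of \<Union>D" and sub: "\<Union>D \<subseteq> {a..b}"
  obtains n A B where "\<And>i. i < (n::nat) \<Longrightarrow> a \<le> A i \<and> A i < B i \<and> B i \<le> b"
    and "\<And>i j. i < n \<Longrightarrow> j < n \<Longrightarrow> i \<noteq> j \<Longrightarrow> B i \<le> A j \<or> B j \<le> A i"
    and "\<forall>F :: real \<Rightarrow> real \<Rightarrow> real. (\<forall>x. F x x = 0) \<longrightarrow> (\<Sum>K\<in>D. F (Sup K) (Inf K)) = (\<Sum>i<n. F (B i) (A i))"
proof -
  define D' where "D' = {K \<in> D. Inf K < Sup K}"
  have "finite D"
    using D by (rule division_of_finite)
  then have "finite D'"
    by (simp add: D'_def)
  then have "\<exists>h. bij_betw h {0..<card D'} D'"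
    by (rule ex_bij_betw_nat_finite)
  then obtain h where h: "bij_betw h {..<card D'} D'"
    by (auto simp: atLeast0LessThan)
  define n where "n = card D'"
  define A where "A i = Inf (h i)" for i
  define B where "B i = Sup (h i)" for i
  have hD: "h i \<in> D" "A i < B i" if "i < n" for i
    using h that by (auto simp: bij_betw_def n_def A_def B_def D'_def)
  have bounds: "a \<le> A i \<and> A i < B i \<and> B i \<le> b" if i: "i < n" for i
  proof -
    obtain \<alpha> \<beta> where "h i = {\<alpha>..\<beta>}" "\<alpha> \<le> \<beta>"
      using division_of_realE[OF D hD(1)[OF i]] .
    moreover have "h i \<subseteq> {a..b}"
      using Union_upper[OF hD(1)[OF i]] sub by (rule order_trans)
    ultimately show ?thesis
      using hD(2)[OF i] by (auto simp: A_def B_def)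
  qed
  have sep: "B i \<le> A j \<or> B j \<le> A i" if "i < n" "j < n" "i \<noteq> j" for i j
  proof -
    have "h i \<noteq> h j"
      using h that by (auto simp: bij_betw_def inj_on_def n_def)
    then show ?thesis
      using division_of_real_separated[OF D hD(1)[OF \<open>i < n\<close>] hD(1)[OF \<open>j < n\<close>]]
        hD(2)[OF \<open>i < n\<close>] hD(2)[OF \<open>j < n\<close>] by (simp add: A_def B_def)
  qed
  have sums: "\<forall>F :: real \<Rightarrow> real \<Rightarrow> real. (\<forall>x. F x x = 0) \<longrightarrow> (\<Sum>K\<in>D. F (Sup K) (Inf K)) = (\<Sum>i<n. F (B i) (A i))"
  proof (intro allI impI)
    fix F :: "real \<Rightarrow> real \<Rightarrow> real"
    assume F: "\<forall>x. F x x = 0"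
    have "(\<Sum>K\<in>D. F (Sup K) (Inf K)) = (\<Sum>K\<in>D'. F (Sup K) (Inf K))"
    proof (rule sum.mono_neutral_right[OF \<open>finite D\<close>])
      show "\<forall>K\<in>D - D'. F (Sup K) (Inf K) = 0"
      proof
        fix K
        assume "K \<in> D - D'"
        then have "K \<in> D" "\<not> Inf K < Sup K"
          by (auto simp: D'_def)
        moreover obtain \<alpha> \<beta> where "K = {\<alpha>..\<beta>}" "\<alpha> \<le> \<beta>"
          using division_of_realE[OF D \<open>K \<in> D\<close>] .
        ultimately show "F (Sup K) (Inf K) = 0"
          by (simp add: F)
      qed
    qed (auto simp: D'_def)
    also have "\<dots> = (\<Sum>i<n. F (B i) (A i))"
      using sum.reindex_bij_betw[OF h, of "\<lambda>K. F (Sup K) (Inf K)"] by (simp add: n_def A_def B_def)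
    finally show "(\<Sum>K\<in>D. F (Sup K) (Inf K)) = (\<Sum>i<n. F (B i) (A i))" .
  qed
  show ?thesis
    by (rule that[OF bounds sep sums])
qed

lemma division_of_real_content:
  fixes D :: "real set set"
  assumes "D division_of S"
  shows "sum ivl_content D = (\<Sum>K\<in>D. Sup K - Inf K)"
proof (rule sum.cong[OF refl])
  fix K
  assume "K \<in> D"
  then obtain \<alpha> \<beta> where "K = {\<alpha>..\<beta>}" "\<alpha> \<le> \<beta>"
    using division_of_realE[OF assms] by blast
  then show "ivl_content K = Sup K - Inf K"
    by simp
qed

lemma habscont_division_sum_less:
  assumes hc: "habscont u a b" and "0 < e"
  obtains d where "0 < d"
    and "\<And>D. D division_of \<Union>D \<Longrightarrow> \<Union>D \<subseteq> {a..b} \<Longrightarrow> sum ivl_content D < d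
           \<Longrightarrow> (\<Sum>K\<in>D. hdist (u (Sup K)) (u (Inf K))) < e"
proof -
  obtain d where "0 < d" and d: "\<forall>(n::nat) A B. (\<forall>i<n. a \<le> A i \<and> A i \<le> B i \<and> B i \<le> b)
      \<and> (\<forall>i<n. \<forall>j<n. i \<noteq> j \<longrightarrow> B i \<le> A j \<or> B j \<le> A i) \<and> (\<Sum>i<n. B i - A i) < d
      \<longrightarrow> (\<Sum>i<n. hdist (u (B i)) (u (A i))) < e"
    using hc[unfolded habscont_def, rule_format, OF \<open>0 < e\<close>] by (elim exE conjE) (rule that)
  have "(\<Sum>K\<in>D. hdist (u (Sup K)) (u (Inf K))) < e"
    if D: "D division_of \<Union>D" "\<Union>D \<subseteq> {a..b}" "sum ivl_content D < d" for D
  proof (rule division_of_real_enumerate[OF D(1,2)])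
    fix n :: nat and A B :: "nat \<Rightarrow> real"
    assume AB: "\<And>i. i < n \<Longrightarrow> a \<le> A i \<and> A i < B i \<and> B i \<le> b"
      and sep: "\<And>i j. i < n \<Longrightarrow> j < n \<Longrightarrow> i \<noteq> j \<Longrightarrow> B i \<le> A j \<or> B j \<le> A i"
      and sums: "\<forall>F :: real \<Rightarrow> real \<Rightarrow> real. (\<forall>x. F x x = 0)
                   \<longrightarrow> (\<Sum>K\<in>D. F (Sup K) (Inf K)) = (\<Sum>i<n. F (B i) (A i))"
    have "(\<Sum>i<n. hdist (u (B i)) (u (A i))) < e"
    proof (rule d[rule_format, OF conjI[OF _ conjI]])
      show "\<forall>i<n. a \<le> A i \<and> A i \<le> B i \<and> B i \<le> b"
        using AB by (auto simp: less_imp_le)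
      show "\<forall>i<n. \<forall>j<n. i \<noteq> j \<longrightarrow> B i \<le> A j \<or> B j \<le> A i"
        using sep by blast
      show "(\<Sum>i<n. B i - A i) < d"
        using sums[rule_format, of "\<lambda>x y. x - y"] division_of_real_content[OF D(1)] D(3) by simp
    qed
    then show "(\<Sum>K\<in>D. hdist (u (Sup K)) (u (Inf K))) < e"
      using sums[rule_format, of "\<lambda>x y. hdist (u x) (u y)"] by (simp add: hdist_self)
  qed
  with \<open>0 < d\<close> show ?thesis
    by (rule that)
qed

lemma absolutely_continuous_on_coef:
  assumes hc: "habscont u a b" and inH: "\<And>t. t \<in> {a..b} \<Longrightarrow> inH (u t)"
  shows "absolutely_continuous_on {a..b} (\<lambda>t. coef (u t) j)"
  unfolding absolutely_continuous_on_def
proof (intro allI impI)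
  fix e :: real
  assume "0 < e"
  obtain d where "0 < d" and d: "\<And>D. D division_of \<Union>D \<Longrightarrow> \<Union>D \<subseteq> {a..b} \<Longrightarrow> sum ivl_content D < d
      \<Longrightarrow> (\<Sum>K\<in>D. hdist (u (Sup K)) (u (Inf K))) < e"
    by (rule habscont_division_sum_less[OF hc \<open>0 < e\<close>]) (rule that)
  have "(\<Sum>K\<in>D. \<bar>coef (u (Sup K)) j - coef (u (Inf K)) j\<bar>) < e"
    if D: "D division_of \<Union>D" "\<Union>D \<subseteq> {a..b}" "sum ivl_content D < d" for D
  proof -
    have "\<bar>coef (u (Sup K)) j - coef (u (Inf K)) j\<bar> \<le> hdist (u (Sup K)) (u (Inf K))" if "K \<in> D" for K
    proof -
      obtain \<alpha> \<beta> where K: "K = {\<alpha>..\<beta>}" "\<alpha> \<le> \<beta>"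
        using division_of_realE[OF D(1) \<open>K \<in> D\<close>] .
      moreover have "K \<subseteq> {a..b}"
        using Union_upper[OF \<open>K \<in> D\<close>] D(2) by (rule order_trans)
      ultimately show ?thesis
        by (simp add: abs_coef_diff_le_hdist inH)
    qed
    then have "(\<Sum>K\<in>D. \<bar>coef (u (Sup K)) j - coef (u (Inf K)) j\<bar>) \<le> (\<Sum>K\<in>D. hdist (u (Sup K)) (u (Inf K)))"
      by (rule sum_mono)
    also have "\<dots> < e"
      using d[OF D] .
    finally show ?thesis .
  qed
  with \<open>0 < d\<close> show "\<exists>d>0. \<forall>D. D division_of \<Union>D \<and> \<Union>D \<subseteq> {a..b} \<and> sum ivl_content D < d
      \<longrightarrow> (\<Sum>K\<in>D. \<bar>coef (u (Sup K)) j - coef (u (Inf K)) j\<bar>) < e"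
    by (intro exI[of _ d]) simp
qed

section \<open>Decay of a single mode\<close>

lemma lam_ge_Suc: "real (Suc j) \<le> lam j"
proof -
  have "1 \<le> real (Suc j) * pi"
    using mult_mono[of 1 "real (Suc j)" 1 pi] pi_gt3 by simp
  then have "real (Suc j) * pi \<le> (real (Suc j) * pi)\<^sup>2"
    by (simp add: power2_eq_square)
  moreover have "real (Suc j) \<le> real (Suc j) * pi"
    using pi_gt3 by simp
  ultimately show ?thesis
    unfolding lam_def by linarith
qed

lemma lam_ge_1: "1 \<le> lam j"
  using lam_ge_Suc[of j] by simp

lemma lam_pos: "0 < lam j"
  using lam_ge_1[of j] by simp

lemma lam_mono: "j \<le> k \<Longrightarrow> lam j \<le> lam k"
  unfolding lam_def by (intro power_mono mult_right_mono) auto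

lemma filterlim_lam_at_top: "filterlim lam at_top sequentially"
proof -
  have "real j \<le> lam j" for j
    using lam_ge_Suc[of j] by simp
  then show ?thesis
    by (intro filterlim_at_top_mono[OF filterlim_real_sequentially] always_eventually) auto
qed

lemma abs_exp_diff_le:
  fixes l :: real
  assumes "0 \<le> l" and "s \<le> b" and "t \<le> b"
  shows "\<bar>exp (l * t) - exp (l * s)\<bar> \<le> l * exp (l * b) * \<bar>t - s\<bar>"
proof -
  have *: "\<bar>exp (l * y) - exp (l * x)\<bar> \<le> l * exp (l * b) * \<bar>y - x\<bar>" if "x < y" "y \<le> b" for x y
  proof -
    have "((\<lambda>z. exp (l * z)) has_real_derivative l * exp (l * z)) (at z)" for z
      by (auto intro!: derivative_eq_intros)
    then obtain z where z: "x < z" "z < y" and eq: "exp (l * y) - exp (l * x) = (y - x) * (l * exp (l * z))"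
      using MVT2[OF \<open>x < y\<close>, of "\<lambda>z. exp (l * z)" "\<lambda>z. l * exp (l * z)"] by blast
    have "l * exp (l * z) \<le> l * exp (l * b)"
      using z that \<open>0 \<le> l\<close> by (intro mult_left_mono) (auto intro: mult_left_mono)
    then show ?thesis
      using eq z \<open>0 \<le> l\<close> by (simp add: abs_mult)
  qed
  consider "s < t" | "s = t" | "t < s"
    by linarith
  then show ?thesis
    using *[of s t] *[of t s] assms by cases (auto simp: abs_minus_commute)
qed

lemma powr_mult_exp_le:
  fixes l x \<beta> :: real
  assumes "0 < l" and "0 < x" and "0 \<le> \<beta>" and "\<beta> \<le> 1"
  shows "l powr \<beta> * exp (- (l * x)) \<le> x powr (- \<beta>)"
proof -
  define y where "y = l * x"
  have "0 < y"
    using assms by (simp add: y_def)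
  have "y powr \<beta> \<le> 1 + y"
  proof (cases "y \<le> 1")
    case True
    then show ?thesis
      using assms \<open>0 < y\<close> powr_le1[of \<beta> y] by simp
  next
    case False
    then show ?thesis
      using assms powr_mono[of \<beta> 1 y] by simp
  qed
  also have "1 + y \<le> exp y"
    by (rule exp_ge_add_one_self)
  finally have "y powr \<beta> * exp (- y) \<le> 1"
    by (simp add: exp_minus field_simps)
  moreover have "l powr \<beta> * exp (- (l * x)) = x powr (- \<beta>) * (y powr \<beta> * exp (- y))"
    using assms by (simp add: y_def powr_mult powr_minus field_simps)
  ultimately show ?thesis
    using mult_left_mono[of "y powr \<beta> * exp (- y)" 1 "x powr (- \<beta>)"] by simp
qed

lemma powr_mult_exp_minus_le_4:
  fixes l p :: real
  assumes "1 \<le> l" and "0 \<le> p" and "p \<le> 2"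
  shows "l powr p * exp (- l) \<le> 4"
proof -
  have "l powr p \<le> l\<^sup>2"
    using assms powr_mono[of p 2 l] by (simp add: powr_numeral)
  moreover have "l\<^sup>2 \<le> 4 * exp l"
  proof -
    have "l / 2 \<le> exp (l / 2)"
      using exp_ge_add_one_self[of "l / 2"] by linarith
    then have "(l / 2)\<^sup>2 \<le> (exp (l / 2))\<^sup>2"
      using assms by (intro power_mono) auto
    then show ?thesis
      by (simp add: power2_eq_square power_divide exp_add[symmetric])
  qed
  ultimately have "l powr p \<le> 4 * exp l"
    by linarith
  then show ?thesis
    by (simp add: exp_minus field_simps)
qed

lemma exp_decay_integral_le:
  fixes l :: real
  assumes "0 < l" and "a \<le> b"
  shows "integrable (lebesgue_on {a..b}) (\<lambda>\<tau>. exp (- (l * (b - \<tau>))))"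
    and "integral\<^sup>L (lebesgue_on {a..b}) (\<lambda>\<tau>. exp (- (l * (b - \<tau>)))) \<le> 1 / l"
proof -
  have "((\<lambda>\<tau>. exp (- (l * (b - \<tau>)))) has_integral
          exp (- (l * (b - b))) / l - exp (- (l * (b - a))) / l) {a..b}"
  proof (rule fundamental_theorem_of_calculus)
    fix x :: real
    have "((\<lambda>\<tau>. exp (- (l * (b - \<tau>))) / l) has_real_derivative exp (- (l * (b - x)))) (at x within {a..b})"
      using \<open>0 < l\<close> by (auto intro!: derivative_eq_intros)
    then show "((\<lambda>\<tau>. exp (- (l * (b - \<tau>))) / l) has_vector_derivative exp (- (l * (b - x))))
                 (at x within {a..b})"
      by (simp add: has_real_derivative_iff_has_vector_derivative)
  qed fact
  note int = has_integral_nonneg_imp_integrable_lebesgue_on[OF this]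
  show "integrable (lebesgue_on {a..b}) (\<lambda>\<tau>. exp (- (l * (b - \<tau>))))"
    using int(1) by simp
  show "integral\<^sup>L (lebesgue_on {a..b}) (\<lambda>\<tau>. exp (- (l * (b - \<tau>)))) \<le> 1 / l"
    using int(2) \<open>0 < l\<close> by (simp add: divide_right_mono)
qed

lemma singular_power_integral:
  fixes \<beta> :: real
  assumes "0 \<le> \<beta>" and "\<beta> < 1" and "a \<le> b"
  shows "integrable (lebesgue_on {a..b}) (\<lambda>\<tau>. (b - \<tau>) powr (- \<beta>))"
    and "integral\<^sup>L (lebesgue_on {a..b}) (\<lambda>\<tau>. (b - \<tau>) powr (- \<beta>)) = (b - a) powr (1 - \<beta>) / (1 - \<beta>)"
proof -
  define F where "F \<tau> = - ((b - \<tau>) powr (1 - \<beta>) / (1 - \<beta>))" for \<tau>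
  have "((\<lambda>\<tau>. (b - \<tau>) powr (- \<beta>)) has_integral F b - F a) {a..b}"
  proof (rule fundamental_theorem_of_calculus_interior)
    show "continuous_on {a..b} F"
      unfolding F_def using assms by (intro continuous_intros continuous_on_powr') auto
    fix x
    assume "x \<in> {a<..<b}"
    then have "(F has_real_derivative - ((1 - \<beta>) * (b - x) powr (1 - \<beta> - 1) * (0 - 1) / (1 - \<beta>))) (at x)"
      unfolding F_def using assms by (auto intro!: derivative_eq_intros)
    moreover have "- ((1 - \<beta>) * (b - x) powr (1 - \<beta> - 1) * (0 - 1) / (1 - \<beta>)) = (b - x) powr (- \<beta>)"
      using assms by simp
    ultimately have "(F has_real_derivative (b - x) powr (- \<beta>)) (at x)"
      by simp
    then show "(F has_vector_derivative (b - x) powr (- \<beta>)) (at x)"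
      by (simp add: has_real_derivative_iff_has_vector_derivative)
  qed fact
  note int = has_integral_nonneg_imp_integrable_lebesgue_on[OF this]
  show "integrable (lebesgue_on {a..b}) (\<lambda>\<tau>. (b - \<tau>) powr (- \<beta>))"
    using int(1) by simp
  show "integral\<^sup>L (lebesgue_on {a..b}) (\<lambda>\<tau>. (b - \<tau>) powr (- \<beta>)) = (b - a) powr (1 - \<beta>) / (1 - \<beta>)"
    using int(2) by (simp add: F_def)
qed

lemma variation_of_constants:
  fixes c \<rho> :: "real \<Rightarrow> real"
  assumes "a \<le> b" and "0 \<le> l"
    and ac: "absolutely_continuous_on {a..b} c" and c_bound: "\<And>t. t \<in> {a..b} \<Longrightarrow> \<bar>c t\<bar> \<le> Bc"
    and N: "negligible N"
    and der: "\<And>t. t \<in> {a..b} - N \<Longrightarrow> (c has_real_derivative \<rho> t - l * c t) (at t)"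
    and \<rho>_meas: "\<rho> \<in> borel_measurable (lebesgue_on {a..b})"
    and \<rho>_bound: "\<And>t. t \<in> {a..b} \<Longrightarrow> \<bar>\<rho> t\<bar> \<le> B\<rho>"
  shows "c b = exp (- (l * (b - a))) * c a + (\<integral>\<tau>. exp (- (l * (b - \<tau>))) * \<rho> \<tau> \<partial>lebesgue_on {a..b})"
proof -
  define \<phi> where "\<phi> t = exp (l * t) * c t" for t
  have "absolutely_continuous_on {a..b} \<phi>"
    unfolding \<phi>_def
  proof (rule absolutely_continuous_on_mult[OF \<open>a \<le> b\<close> _ ac])
    show "absolutely_continuous_on {a..b} (\<lambda>t. exp (l * t))"
      using abs_exp_diff_le[OF \<open>0 \<le> l\<close>] \<open>0 \<le> l\<close>
      by (intro absolutely_continuous_on_lipschitz[where L = "l * exp (l * b)"]) auto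
    show "\<bar>exp (l * t)\<bar> \<le> exp (l * b)" if "t \<in> {a..b}" for t
      using that \<open>0 \<le> l\<close> by (auto intro: mult_left_mono)
  qed (rule c_bound)
  moreover have "(\<phi> has_real_derivative exp (l * t) * \<rho> t) (at t within {a..b})" if "t \<in> {a..b} - N" for t
  proof -
    have "(\<phi> has_real_derivative l * exp (l * t) * c t + (\<rho> t - l * c t) * exp (l * t)) (at t)"
      unfolding \<phi>_def by (rule DERIV_mult[OF _ der[OF that]]) (auto intro!: derivative_eq_intros)
    then show ?thesis
      by (simp add: algebra_simps has_field_derivative_at_within)
  qed
  ultimately have "((\<lambda>t. exp (l * t) * \<rho> t) has_integral \<phi> b - \<phi> a) {a..b}"
    by (rule fundamental_theorem_of_calculus_absolutely_continuous[OF \<open>a \<le> b\<close> _ N])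
  moreover have "integrable (lebesgue_on {a..b}) (\<lambda>t. exp (l * t) * \<rho> t)"
  proof (rule integrable_lebesgue_on_Icc_bounded)
    have "(\<lambda>t. exp (l * t)) \<in> borel_measurable (lebesgue_on {a..b})"
      by (intro continuous_imp_measurable_on_sets_lebesgue continuous_intros) auto
    then show "(\<lambda>t. exp (l * t) * \<rho> t) \<in> borel_measurable (lebesgue_on {a..b})"
      using \<rho>_meas by (rule borel_measurable_times)
    show "\<bar>exp (l * t) * \<rho> t\<bar> \<le> exp (l * b) * B\<rho>" if "t \<in> {a..b}" for t
      using that \<open>0 \<le> l\<close> \<rho>_bound[OF that] by (auto simp: abs_mult intro!: mult_mono mult_left_mono)
  qed
  ultimately have "(\<integral>t. exp (l * t) * \<rho> t \<partial>lebesgue_on {a..b}) = \<phi> b - \<phi> a"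
    by (metis integral_unique lebesgue_integral_eq_integral sets_lborel atLeastAtMost_borel
          sets_completionI_sets)
  moreover have "(\<lambda>\<tau>. exp (- (l * (b - \<tau>))) * \<rho> \<tau>) = (\<lambda>\<tau>. exp (- (l * b)) * (exp (l * \<tau>) * \<rho> \<tau>))"
    by (auto simp: algebra_simps exp_add[symmetric])
  ultimately have "(\<integral>\<tau>. exp (- (l * (b - \<tau>))) * \<rho> \<tau> \<partial>lebesgue_on {a..b})
                     = exp (- (l * b)) * (\<phi> b - \<phi> a)"
    by simp
  also have "\<dots> = c b - exp (- (l * (b - a))) * c a"
    by (simp add: \<phi>_def algebra_simps exp_add[symmetric])
  finally show ?thesis
    by simp
qed

lemma exp_weighted_integral_sq_le:
  fixes l :: real and \<rho> :: "real \<Rightarrow> real"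
  assumes "0 < l" and "a \<le> b"
    and \<rho>_meas: "\<rho> \<in> borel_measurable (lebesgue_on {a..b})"
    and \<rho>_bound: "\<And>t. t \<in> {a..b} \<Longrightarrow> \<bar>\<rho> t\<bar> \<le> B"
  shows "integrable (lebesgue_on {a..b}) (\<lambda>\<tau>. exp (- (l * (b - \<tau>))) * (\<rho> \<tau>)\<^sup>2)"
    and "(\<integral>\<tau>. exp (- (l * (b - \<tau>))) * \<rho> \<tau> \<partial>lebesgue_on {a..b})\<^sup>2
           \<le> (\<integral>\<tau>. exp (- (l * (b - \<tau>))) * (\<rho> \<tau>)\<^sup>2 \<partial>lebesgue_on {a..b}) / l"
proof -
  let ?M = "lebesgue_on {a..b}"
  define E where "E \<tau> = exp (- (l * (b - \<tau>)))" for \<tau>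
  have E_meas: "E \<in> borel_measurable ?M"
    unfolding E_def by (intro continuous_imp_measurable_on_sets_lebesgue continuous_intros) auto
  have E_bound: "0 \<le> E \<tau> \<and> E \<tau> \<le> 1" if "\<tau> \<in> {a..b}" for \<tau>
    using that \<open>0 < l\<close> by (auto simp: E_def)
  have "0 \<le> B"
    using \<rho>_bound[of a] \<open>a \<le> b\<close> by simp
  have E\<rho>_bound: "\<bar>E \<tau> * \<rho> \<tau>\<bar> \<le> B" and E\<rho>2_bound: "\<bar>E \<tau> * (\<rho> \<tau>)\<^sup>2\<bar> \<le> B\<^sup>2"
    if "\<tau> \<in> {a..b}" for \<tau>
  proof -
    have "\<bar>\<rho> \<tau>\<bar> \<le> B" "0 \<le> E \<tau>" "E \<tau> \<le> 1"
      using \<rho>_bound E_bound that by auto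
    moreover from this have "(\<rho> \<tau>)\<^sup>2 \<le> B\<^sup>2"
      by (metis abs_le_square_iff abs_of_nonneg \<open>0 \<le> B\<close>)
    ultimately show "\<bar>E \<tau> * \<rho> \<tau>\<bar> \<le> B" "\<bar>E \<tau> * (\<rho> \<tau>)\<^sup>2\<bar> \<le> B\<^sup>2"
      using mult_mono[of "E \<tau>" 1 "\<bar>\<rho> \<tau>\<bar>" B] mult_mono[of "E \<tau>" 1 "(\<rho> \<tau>)\<^sup>2" "B\<^sup>2"]
      by (simp_all add: abs_mult)
  qed
  have int_E: "integrable ?M E"
    unfolding E_def using exp_decay_integral_le(1)[OF \<open>0 < l\<close> \<open>a \<le> b\<close>] .
  have int_E\<rho>: "integrable ?M (\<lambda>\<tau>. E \<tau> * \<rho> \<tau>)"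
    using E_meas \<rho>_meas E\<rho>_bound by (intro integrable_lebesgue_on_Icc_bounded) auto
  have int_E\<rho>2: "integrable ?M (\<lambda>\<tau>. E \<tau> * (\<rho> \<tau>)\<^sup>2)"
    using E_meas \<rho>_meas E\<rho>2_bound by (intro integrable_lebesgue_on_Icc_bounded) auto
  then show "integrable ?M (\<lambda>\<tau>. exp (- (l * (b - \<tau>))) * (\<rho> \<tau>)\<^sup>2)"
    by (simp add: E_def)
  define F where "F \<tau> = exp (- (l * (b - \<tau>)) / 2)" for \<tau>
  have "(\<lambda>\<tau>. (F \<tau>)\<^sup>2) = E" "(\<lambda>\<tau>. (F \<tau> * \<rho> \<tau>)\<^sup>2) = (\<lambda>\<tau>. E \<tau> * (\<rho> \<tau>)\<^sup>2)"
    "(\<lambda>\<tau>. F \<tau> * (F \<tau> * \<rho> \<tau>)) = (\<lambda>\<tau>. E \<tau> * \<rho> \<tau>)"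
    by (auto simp: F_def E_def power_mult_distrib power2_eq_square exp_add[symmetric])
  then have "(\<integral>\<tau>. E \<tau> * \<rho> \<tau> \<partial>?M)\<^sup>2 \<le> (\<integral>\<tau>. E \<tau> \<partial>?M) * (\<integral>\<tau>. E \<tau> * (\<rho> \<tau>)\<^sup>2 \<partial>?M)"
    using Cauchy_Schwarz_integral[of ?M F "\<lambda>\<tau>. F \<tau> * \<rho> \<tau>"] int_E int_E\<rho> int_E\<rho>2
    by simp
  also have "\<dots> \<le> (1 / l) * (\<integral>\<tau>. E \<tau> * (\<rho> \<tau>)\<^sup>2 \<partial>?M)"
    using exp_decay_integral_le(2)[OF \<open>0 < l\<close> \<open>a \<le> b\<close>] E_bound
    by (intro mult_right_mono integral_nonneg_AE AE_I2) (auto simp: E_def)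
  finally show "(\<integral>\<tau>. exp (- (l * (b - \<tau>))) * \<rho> \<tau> \<partial>?M)\<^sup>2
                  \<le> (\<integral>\<tau>. exp (- (l * (b - \<tau>))) * (\<rho> \<tau>)\<^sup>2 \<partial>?M) / l"
    by (simp add: E_def)
qed

lemma mode_smoothing_estimate:
  fixes l p c0 c1 :: real and \<rho> :: "real \<Rightarrow> real"
  assumes "1 \<le> l" and "0 \<le> p" and "p \<le> 2"
    and \<rho>_meas: "\<rho> \<in> borel_measurable (lebesgue_on {1/2..1})"
    and \<rho>_bound: "\<And>t. t \<in> {1/2..1} \<Longrightarrow> \<bar>\<rho> t\<bar> \<le> B"
    and c1: "c1 = exp (- (l / 2)) * c0 + (\<integral>\<tau>. exp (- (l * (1 - \<tau>))) * \<rho> \<tau> \<partial>lebesgue_on {1/2..1})"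
  shows "l powr p * c1\<^sup>2
           \<le> 8 * c0\<^sup>2 + 2 * (\<integral>\<tau>. l powr (p - 1) * exp (- (l * (1 - \<tau>))) * (\<rho> \<tau>)\<^sup>2 \<partial>lebesgue_on {1/2..1})"
proof -
  define X where "X = (\<integral>\<tau>. exp (- (l * (1 - \<tau>))) * \<rho> \<tau> \<partial>lebesgue_on {1/2..1})"
  define Q where "Q = (\<integral>\<tau>. exp (- (l * (1 - \<tau>))) * (\<rho> \<tau>)\<^sup>2 \<partial>lebesgue_on {1/2..1})"
  have "0 < l"
    using \<open>1 \<le> l\<close> by simp
  have X2: "X\<^sup>2 \<le> Q / l"
    unfolding X_def Q_def using exp_weighted_integral_sq_le(2)[OF \<open>0 < l\<close> _ \<rho>_meas \<rho>_bound] by simp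
  have "c1\<^sup>2 \<le> 2 * (exp (- (l / 2)) * c0)\<^sup>2 + 2 * X\<^sup>2"
    using zero_le_power2[of "exp (- (l / 2)) * c0 - X"]
    by (simp add: c1 X_def power2_eq_square algebra_simps)
  also have "(exp (- (l / 2)) * c0)\<^sup>2 = exp (- l) * c0\<^sup>2"
    by (simp add: power_mult_distrib power2_eq_square exp_add[symmetric])
  finally have "l powr p * c1\<^sup>2 \<le> l powr p * (2 * (exp (- l) * c0\<^sup>2) + 2 * X\<^sup>2)"
    by (rule mult_left_mono) simp
  also have "\<dots> = 2 * (l powr p * exp (- l)) * c0\<^sup>2 + 2 * (l powr p * X\<^sup>2)"
    by (simp add: algebra_simps)
  also have "2 * (l powr p * exp (- l)) * c0\<^sup>2 \<le> 8 * c0\<^sup>2"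
    using powr_mult_exp_minus_le_4[OF \<open>1 \<le> l\<close> \<open>0 \<le> p\<close> \<open>p \<le> 2\<close>] by (intro mult_right_mono) (auto simp: mult.commute)
  also have "l powr p * X\<^sup>2 \<le> l powr (p - 1) * Q"
    using mult_left_mono[OF X2, of "l powr p"] \<open>0 < l\<close> by (simp add: powr_diff)
  also have "l powr (p - 1) * Q
               = (\<integral>\<tau>. l powr (p - 1) * exp (- (l * (1 - \<tau>))) * (\<rho> \<tau>)\<^sup>2 \<partial>lebesgue_on {1/2..1})"
    by (simp add: Q_def mult.assoc)
  finally show ?thesis
    by simp
qed

section \<open>Sine coefficients of solutions\<close>

lemma AE_lebesgue_on_positive_imp_negligible:
  fixes P :: "real \<Rightarrow> bool"
  assumes "AE t in lebesgue_on {0<..}. P t"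
  obtains N where "negligible N" and "\<And>t. 0 < t \<Longrightarrow> t \<notin> N \<Longrightarrow> P t"
proof -
  have "AE t in lebesgue. t \<in> {0<..} \<longrightarrow> P t"
    using assms by (subst (asm) AE_restrict_space_iff) auto
  then obtain N where N: "{t \<in> space lebesgue. \<not> (t \<in> {0<..} \<longrightarrow> P t)} \<subseteq> N"
    "emeasure lebesgue N = 0" "N \<in> sets lebesgue"
    by (rule AE_E)
  have "negligible N"
    using N(2,3) by (simp add: negligible_iff_null_sets null_sets_def)
  moreover have "\<And>t. 0 < t \<Longrightarrow> t \<notin> N \<Longrightarrow> P t"
    using N(1) by auto
  ultimately show ?thesis
    by (rule that)
qed

lemma solP_forcing:
  assumes "solP b \<omega> u0 u"
  obtains r N where "L2loc r" and "negligible N"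
    and "\<And>t. 0 < t \<Longrightarrow> t \<notin> N \<Longrightarrow> inH (r t)"
    and "\<And>t. 0 < t \<Longrightarrow> t \<notin> N \<Longrightarrow> \<exists>w g. hderiv u t w \<and> isA (u t) g \<and> hdist (\<lambda>x. w x + g x) (r t) = 0"
    and "\<And>t. 0 < t \<Longrightarrow> t \<notin> N \<Longrightarrow> AE x in M01. r t x \<in> {b * s + \<omega> * u t x | s. s \<in> H0 (u t x)}"
proof -
  obtain r where r: "L2loc r"
    "AE t in lebesgue_on {0<..}. AE x in M01. r t x \<in> {b * s + \<omega> * u t x | s. s \<in> H0 (u t x)}"
    "AE t in lebesgue_on {0<..}. \<exists>w g. hderiv u t w \<and> isA (u t) g \<and> hdist (\<lambda>x. w x + g x) (r t) = 0"
    using assms unfolding solP_def by blast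
  have "AE t in lebesgue_on {0<..}. inH (r t)"
    using r(1) by (simp add: L2loc_def)
  with r(2,3) have "AE t in lebesgue_on {0<..}. inH (r t) \<and>
      (\<exists>w g. hderiv u t w \<and> isA (u t) g \<and> hdist (\<lambda>x. w x + g x) (r t) = 0) \<and>
      (AE x in M01. r t x \<in> {b * s + \<omega> * u t x | s. s \<in> H0 (u t x)})"
    by eventually_elim blast
  then obtain N where "negligible N" and "\<And>t. 0 < t \<Longrightarrow> t \<notin> N \<Longrightarrow> inH (r t) \<and>
      (\<exists>w g. hderiv u t w \<and> isA (u t) g \<and> hdist (\<lambda>x. w x + g x) (r t) = 0) \<and>
      (AE x in M01. r t x \<in> {b * s + \<omega> * u t x | s. s \<in> H0 (u t x)})"
    by (rule AE_lebesgue_on_positive_imp_negligible) (assumption | rule that)+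
  with r(1) show ?thesis
    using that by blast
qed

lemma coef_has_real_derivative:
  assumes "hcont u" and "0 < t" and "hderiv u t w" and "isA (u t) g"
    and "hdist (\<lambda>x. w x + g x) f = 0" and "inH f"
  shows "((\<lambda>s. coef (u s) j) has_real_derivative coef f j - lam j * coef (u t) j) (at t)"
proof -
  have w: "inH w" and g: "inH g" and u: "inH (u t)" and cg: "coef g j = lam j * coef (u t) j"
    using assms(3,4) by (auto simp: hderiv_def isA_def inDA_def)
  have "coef w j + coef g j = coef f j"
    using coef_add[OF w g] coef_eq_if_hdist_eq_0[OF inH_add[OF w g] \<open>inH f\<close> assms(5)] by simp
  then have cw: "coef w j = coef f j - lam j * coef (u t) j"
    using cg by simp
  have "\<forall>\<^sub>F h in at 0. norm ((coef (u (t + h)) j - coef (u t) j) / h - coef w j)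
          \<le> hdist (\<lambda>x. (u (t + h) x - u t x) / h) w"
    unfolding eventually_at
  proof (intro exI[of _ t] conjI ballI impI)
    fix h :: real
    assume "h \<noteq> 0 \<and> dist h 0 < t"
    then have uh: "inH (u (t + h))"
      using \<open>hcont u\<close> by (auto simp: hcont_def dist_real_def)
    have quot: "(\<lambda>x. (u (t + h) x - u t x) / h) = (\<lambda>x. (1 / h) * u (t + h) x + (- 1 / h) * u t x)"
      by (simp add: diff_divide_distrib)
    have iq: "inH (\<lambda>x. (u (t + h) x - u t x) / h)"
      unfolding quot using uh u by (rule inH_lin)
    have cq: "coef (\<lambda>x. (u (t + h) x - u t x) / h) j = (coef (u (t + h)) j - coef (u t) j) / h"
      unfolding quot coef_lin[OF uh u] by (simp add: diff_divide_distrib)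
    show "norm ((coef (u (t + h)) j - coef (u t) j) / h - coef w j)
                 \<le> hdist (\<lambda>x. (u (t + h) x - u t x) / h) w"
      using abs_coef_diff_le_hdist[OF iq w, of j] cq by simp
  qed (use \<open>0 < t\<close> in simp)
  moreover have "((\<lambda>h. hdist (\<lambda>x. (u (t + h) x - u t x) / h) w) \<longlongrightarrow> 0) (at 0)"
    using assms(3) by (simp add: hderiv_def)
  ultimately have "((\<lambda>h. (coef (u (t + h)) j - coef (u t) j) / h - coef w j) \<longlongrightarrow> 0) (at 0)"
    by (rule Lim_null_comparison)
  then show ?thesis
    unfolding DERIV_def cw[symmetric] by (simp add: LIM_zero_iff)
qed

lemma coef_measurable_L2loc:
  assumes "L2loc r" and "0 < a"
  shows "(\<lambda>t. coef (r t) j) \<in> borel_measurable (lebesgue_on {a..b})"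
proof -
  have "(\<lambda>t. integral\<^sup>L M01 (\<lambda>x. r t x * sine_mode j x)) \<in> borel_measurable (lebesgue_on {0<..})"
    using assms(1) inH_sine_mode[of j] by (simp add: L2loc_def)
  then have "(\<lambda>t. integral\<^sup>L M01 (\<lambda>x. r t x * sine_mode j x)) \<in> borel_measurable (lebesgue_on {a..b})"
    by (rule measurable_restrict_mono) (use \<open>0 < a\<close> in auto)
  then show ?thesis
    by (simp add: coef_def)
qed

lemma hnorm_sq_le_of_selection:
  assumes "inH f" and "inH v"
    and sel: "AE x in M01. f x \<in> {b * s + \<omega> * v x | s. s \<in> H0 (v x)}"
  shows "(hnorm f)\<^sup>2 \<le> 2 * b\<^sup>2 + 2 * \<omega>\<^sup>2 * (hnorm v)\<^sup>2"
proof -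
  have "AE x in M01. (f x)\<^sup>2 \<le> 2 * b\<^sup>2 + 2 * \<omega>\<^sup>2 * (v x)\<^sup>2"
    using sel
  proof eventually_elim
    case (elim x)
    then obtain s where s: "f x = b * s + \<omega> * v x" "s \<in> H0 (v x)"
      by blast
    have "s\<^sup>2 \<le> 1"
      using s(2) by (auto simp: H0_def abs_square_le_1 split: if_splits)
    then have "(b * s)\<^sup>2 \<le> b\<^sup>2"
      by (simp add: power_mult_distrib mult_left_le)
    moreover have "(b * s + \<omega> * v x)\<^sup>2 \<le> 2 * (b * s)\<^sup>2 + 2 * (\<omega> * v x)\<^sup>2"
      using zero_le_power2[of "b * s - \<omega> * v x"] by (simp add: power2_eq_square algebra_simps)
    ultimately show ?case
      using s(1) by (simp add: power_mult_distrib)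
  qed
  then have "integral\<^sup>L M01 (\<lambda>x. (f x)\<^sup>2) \<le> integral\<^sup>L M01 (\<lambda>x. 2 * b\<^sup>2 + 2 * \<omega>\<^sup>2 * (v x)\<^sup>2)"
    using assms(1,2) by (intro integral_mono_AE) (auto simp: inH_def)
  also have "\<dots> = 2 * b\<^sup>2 + 2 * \<omega>\<^sup>2 * integral\<^sup>L M01 (\<lambda>x. (v x)\<^sup>2)"
    using assms(2) by (simp add: inH_def measure_restrict_space)
  finally show ?thesis
    by (simp add: hnorm_sq)
qed

lemma abs_coef_le_hnorm: "inH f \<Longrightarrow> \<bar>coef f j\<bar> \<le> hnorm f"
  using coef_sq_le_hnorm_sq[of f j] hnorm_nonneg[of f] by (metis abs_le_square_iff abs_of_nonneg)

lemma solution_forcing_bound: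
  assumes sol: "solP b \<omega> u0 u" and R: "\<And>t. t \<in> {0..1} \<Longrightarrow> hnorm (u t) \<le> R"
  obtains r N where "L2loc r" and "negligible N"
    and "\<And>t. t \<in> {0<..1} - N \<Longrightarrow> inH (r t) \<and> (hnorm (r t))\<^sup>2 \<le> 2 * b\<^sup>2 + 2 * \<omega>\<^sup>2 * R\<^sup>2"
    and "\<And>t j. t \<in> {0<..1} - N
           \<Longrightarrow> ((\<lambda>s. coef (u s) j) has_real_derivative coef (r t) j - lam j * coef (u t) j) (at t)"
proof -
  obtain r N where r: "L2loc r" "negligible N"
    and r_inH: "\<And>t. 0 < t \<Longrightarrow> t \<notin> N \<Longrightarrow> inH (r t)"
    and r_eq: "\<And>t. 0 < t \<Longrightarrow> t \<notin> N \<Longrightarrow> \<exists>w g. hderiv u t w \<and> isA (u t) g \<and> hdist (\<lambda>x. w x + g x) (r t) = 0"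
    and r_sel: "\<And>t. 0 < t \<Longrightarrow> t \<notin> N \<Longrightarrow> AE x in M01. r t x \<in> {b * s + \<omega> * u t x | s. s \<in> H0 (u t x)}"
    by (rule solP_forcing[OF sol]) (rule that)
  have hc: "hcont u"
    using sol by (simp add: solP_def)
  then have u_inH: "\<And>t. 0 \<le> t \<Longrightarrow> inH (u t)"
    by (simp add: hcont_def)
  have "inH (r t) \<and> (hnorm (r t))\<^sup>2 \<le> 2 * b\<^sup>2 + 2 * \<omega>\<^sup>2 * R\<^sup>2" if t: "t \<in> {0<..1} - N" for t
  proof -
    have "(hnorm (r t))\<^sup>2 \<le> 2 * b\<^sup>2 + 2 * \<omega>\<^sup>2 * (hnorm (u t))\<^sup>2"
      using t by (intro hnorm_sq_le_of_selection r_inH r_sel u_inH) auto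
    also have "(hnorm (u t))\<^sup>2 \<le> R\<^sup>2"
      using R[of t] t hnorm_nonneg[of "u t"] by (auto intro: power_mono)
    finally show ?thesis
      using r_inH t by (auto simp: mult_left_mono)
  qed
  moreover have "((\<lambda>s. coef (u s) j) has_real_derivative coef (r t) j - lam j * coef (u t) j) (at t)"
    if t: "t \<in> {0<..1} - N" for t j
  proof -
    have "0 < t" "t \<notin> N"
      using t by auto
    then obtain w g where "hderiv u t w" "isA (u t) g" "hdist (\<lambda>x. w x + g x) (r t) = 0"
      using r_eq by blast
    then show ?thesis
      using coef_has_real_derivative[OF hc] r_inH t by simp
  qed
  ultimately show ?thesis
    using r by (intro that) auto
qed

lemma solution_forcing_coefs:
  assumes sol: "solP b \<omega> u0 u" and R: "\<And>t. t \<in> {0..1} \<Longrightarrow> hnorm (u t) \<le> R"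
  obtains N \<rho> where "negligible N"
    and "\<And>j. \<rho> j \<in> borel_measurable (lebesgue_on {1/2..1})"
    and "\<And>j t. \<bar>\<rho> j t\<bar> \<le> sqrt (2 * b\<^sup>2 + 2 * \<omega>\<^sup>2 * R\<^sup>2)"
    and "\<And>n t. (\<Sum>j<n. (\<rho> j t)\<^sup>2) \<le> 2 * b\<^sup>2 + 2 * \<omega>\<^sup>2 * R\<^sup>2"
    and "\<And>j. \<rho> j 1 = 0"
    and "\<And>j t. t \<in> {1/2..1} - N
           \<Longrightarrow> ((\<lambda>s. coef (u s) j) has_real_derivative \<rho> j t - lam j * coef (u t) j) (at t)"
proof -
  define M where "M = 2 * b\<^sup>2 + 2 * \<omega>\<^sup>2 * R\<^sup>2"
  obtain r N where "L2loc r" "negligible N"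
    and r_bound: "\<And>t. t \<in> {0<..1} - N \<Longrightarrow> inH (r t) \<and> (hnorm (r t))\<^sup>2 \<le> M"
    and der: "\<And>t j. t \<in> {0<..1} - N
                \<Longrightarrow> ((\<lambda>s. coef (u s) j) has_real_derivative coef (r t) j - lam j * coef (u t) j) (at t)"
    by (rule solution_forcing_bound[OF sol R, folded M_def]) (assumption | rule that)+
  define N' where "N' = insert 1 N"
  define \<rho> where "\<rho> j t = (if t \<in> {1/2..1} - N' then coef (r t) j else 0)" for j t
  have good: "t \<in> {0<..1} - N" if "t \<in> {1/2..1} - N'" for t
    using that by (auto simp: N'_def)
  have "negligible N'"
    using \<open>negligible N\<close> by (simp add: N'_def)
  have meas: "\<rho> j \<in> borel_measurable (lebesgue_on {1/2..1})" for j
  proof -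
    have "N' \<in> sets lebesgue"
      using \<open>negligible N'\<close> by (rule negligible_imp_sets)
    then have "({1/2..1} - N') \<inter> space (lebesgue_on {1/2..1}) \<in> sets (lebesgue_on {1/2..1})"
      by (auto simp: sets_restrict_space_iff intro!: sets.Int sets.Diff)
    then show ?thesis
      unfolding \<rho>_def[abs_def]
      by (intro measurable_If_set coef_measurable_L2loc[OF \<open>L2loc r\<close>]) auto
  qed
  have sum_bound: "(\<Sum>j<n. (\<rho> j t)\<^sup>2) \<le> M" for n t
  proof (cases "t \<in> {1/2..1} - N'")
    case True
    then have "(\<Sum>j<n. (\<rho> j t)\<^sup>2) \<le> (hnorm (r t))\<^sup>2"
      using r_bound[OF good] by (simp add: \<rho>_def coef_Bessel_inequality)
    with r_bound[OF good[OF True]] show ?thesis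
      by simp
  next
    case False
    then have "\<rho> j t = 0" for j
      unfolding \<rho>_def by (simp only: if_False)
    then show ?thesis
      by (simp add: M_def)
  qed
  have bound: "\<bar>\<rho> j t\<bar> \<le> sqrt M" for j t
    using sum_bound[where n = "Suc j" and t = t] sum_nonneg[of "{..<j}" "\<lambda>i. (\<rho> i t)\<^sup>2"]
    by (simp add: real_le_rsqrt)
  have at_1: "\<rho> j 1 = 0" for j
    by (simp add: \<rho>_def N'_def)
  have deriv: "((\<lambda>s. coef (u s) j) has_real_derivative \<rho> j t - lam j * coef (u t) j) (at t)"
    if "t \<in> {1/2..1} - N'" for j t
    using der[OF good[OF that]] that by (simp add: \<rho>_def)
  show ?thesis
    using \<open>negligible N'\<close> meas bound[unfolded M_def] sum_bound[unfolded M_def] at_1 deriv by (rule that)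
qed

lemma solution_coef_estimate:
  fixes u :: "real \<Rightarrow> real \<Rightarrow> real" and \<rho> :: "real \<Rightarrow> real"
  assumes hab: "habscont u (1/2) 1" and u_inH: "\<And>t. t \<in> {1/2..1} \<Longrightarrow> inH (u t)"
    and R: "\<And>t. t \<in> {1/2..1} \<Longrightarrow> hnorm (u t) \<le> R"
    and N: "negligible N"
    and der: "\<And>t. t \<in> {1/2..1} - N
                \<Longrightarrow> ((\<lambda>s. coef (u s) j) has_real_derivative \<rho> t - lam j * coef (u t) j) (at t)"
    and \<rho>_meas: "\<rho> \<in> borel_measurable (lebesgue_on {1/2..1})"
    and \<rho>_bound: "\<And>t. t \<in> {1/2..1} \<Longrightarrow> \<bar>\<rho> t\<bar> \<le> B"
    and "0 \<le> p" and "p \<le> 2"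
  shows "lam j powr p * (coef (u 1) j)\<^sup>2 \<le> 8 * (coef (u (1/2)) j)\<^sup>2
           + 2 * (\<integral>\<tau>. lam j powr (p - 1) * exp (- (lam j * (1 - \<tau>))) * (\<rho> \<tau>)\<^sup>2 \<partial>lebesgue_on {1/2..1})"
proof (rule mode_smoothing_estimate[OF lam_ge_1 \<open>0 \<le> p\<close> \<open>p \<le> 2\<close> \<rho>_meas \<rho>_bound])
  have "coef (u 1) j = exp (- (lam j * (1 - 1/2))) * coef (u (1/2)) j
          + (\<integral>\<tau>. exp (- (lam j * (1 - \<tau>))) * \<rho> \<tau> \<partial>lebesgue_on {1/2..1})"
  proof (rule variation_of_constants[OF _ _ _ _ N der \<rho>_meas \<rho>_bound])
    show "absolutely_continuous_on {1/2..1} (\<lambda>t. coef (u t) j)"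
      using hab u_inH by (rule absolutely_continuous_on_coef)
    show "\<bar>coef (u t) j\<bar> \<le> R" if "t \<in> {1/2..1}" for t
      using abs_coef_le_hnorm[OF u_inH[OF that], of j] R[OF that] by linarith
  qed (use lam_pos[of j] in auto)
  then show "coef (u 1) j = exp (- (lam j / 2)) * coef (u (1/2)) j
               + (\<integral>\<tau>. exp (- (lam j * (1 - \<tau>))) * \<rho> \<tau> \<partial>lebesgue_on {1/2..1})"
    by simp
qed (simp_all add: \<rho>_bound)

lemma sum_lam_powr_exp_le:
  assumes "0 < x" and "0 \<le> \<beta>" and "\<beta> \<le> 1" and "(\<Sum>j<n. (y j)\<^sup>2) \<le> M"
  shows "(\<Sum>j<n. lam j powr \<beta> * exp (- (lam j * x)) * (y j)\<^sup>2) \<le> M * x powr (- \<beta>)"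
proof -
  have "(\<Sum>j<n. lam j powr \<beta> * exp (- (lam j * x)) * (y j)\<^sup>2) \<le> (\<Sum>j<n. x powr (- \<beta>) * (y j)\<^sup>2)"
    using powr_mult_exp_le[OF lam_pos assms(1-3)] by (intro sum_mono mult_right_mono) auto
  also have "\<dots> \<le> x powr (- \<beta>) * M"
    unfolding sum_distrib_left[symmetric] using assms(4) by (intro mult_left_mono) auto
  finally show ?thesis
    by (simp add: mult.commute)
qed

lemma sum_mode_integrals_le:
  fixes \<rho> :: "nat \<Rightarrow> real \<Rightarrow> real"
  assumes \<rho>_meas: "\<And>j. \<rho> j \<in> borel_measurable (lebesgue_on {1/2..1})"
    and \<rho>_bound: "\<And>j t. \<bar>\<rho> j t\<bar> \<le> B" and \<rho>_sum: "\<And>t. (\<Sum>j<n. (\<rho> j t)\<^sup>2) \<le> M"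
    and \<rho>_1: "\<And>j. \<rho> j 1 = 0" and "0 \<le> \<beta>" and "\<beta> < 1"
  shows "(\<Sum>j<n. \<integral>\<tau>. lam j powr \<beta> * exp (- (lam j * (1 - \<tau>))) * (\<rho> j \<tau>)\<^sup>2 \<partial>lebesgue_on {1/2..1})
           \<le> M * ((1/2) powr (1 - \<beta>) / (1 - \<beta>))"
proof -
  let ?M = "lebesgue_on {1/2..1::real}"
  define G where "G j \<tau> = lam j powr \<beta> * exp (- (lam j * (1 - \<tau>))) * (\<rho> j \<tau>)\<^sup>2" for j \<tau>
  have G_int: "integrable ?M (G j)" for j
  proof -
    have "integrable ?M (\<lambda>\<tau>. lam j powr \<beta> * (exp (- (lam j * (1 - \<tau>))) * (\<rho> j \<tau>)\<^sup>2))"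
      using exp_weighted_integral_sq_le(1)[OF lam_pos[of j] _ \<rho>_meas[of j] \<rho>_bound[of j]]
      by (intro integrable_mult_right) simp
    then show ?thesis
      by (simp add: G_def[abs_def] mult.assoc)
  qed
  have "(\<Sum>j<n. integral\<^sup>L ?M (G j)) = integral\<^sup>L ?M (\<lambda>\<tau>. \<Sum>j<n. G j \<tau>)"
    using G_int by simp
  also have "\<dots> \<le> integral\<^sup>L ?M (\<lambda>\<tau>. M * (1 - \<tau>) powr (- \<beta>))"
  proof (rule integral_mono)
    show "integrable ?M (\<lambda>\<tau>. M * (1 - \<tau>) powr (- \<beta>))"
      using singular_power_integral(1)[OF \<open>0 \<le> \<beta>\<close> \<open>\<beta> < 1\<close>, of "1/2" 1] by simp
    fix \<tau>
    assume "\<tau> \<in> space ?M"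
    then have \<tau>: "\<tau> \<in> {1/2..1}"
      by simp
    show "(\<Sum>j<n. G j \<tau>) \<le> M * (1 - \<tau>) powr (- \<beta>)"
    proof (cases "\<tau> = 1")
      case True
      \<comment> \<open>\<open>0 powr - \<beta> = 0\<close>, so the forcing has to vanish at the endpoint\<close>
      then show ?thesis
        by (simp add: G_def \<rho>_1)
    next
      case False
      with \<tau> have "0 < 1 - \<tau>"
        by simp
      then show ?thesis
        unfolding G_def using \<rho>_sum \<open>0 \<le> \<beta>\<close> \<open>\<beta> < 1\<close> by (intro sum_lam_powr_exp_le) auto
    qed
  qed (use G_int in simp)
  also have "\<dots> = M * ((1/2) powr (1 - \<beta>) / (1 - \<beta>))"
    using singular_power_integral(2)[OF \<open>0 \<le> \<beta>\<close> \<open>\<beta> < 1\<close>, of "1/2" 1] by simp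
  finally show ?thesis
    by (simp add: G_def[abs_def])
qed

lemma solution_smoothing_estimate:
  assumes sol: "solP b \<omega> u0 u" and R: "\<And>t. t \<in> {0..1} \<Longrightarrow> hnorm (u t) \<le> R"
    and "0 \<le> \<beta>" and "\<beta> < 1"
  shows "(\<Sum>j<n. lam j powr (1 + \<beta>) * (coef (u 1) j)\<^sup>2)
           \<le> 8 * R\<^sup>2 + 2 * ((2 * b\<^sup>2 + 2 * \<omega>\<^sup>2 * R\<^sup>2) * ((1/2) powr (1 - \<beta>) / (1 - \<beta>)))"
proof -
  define M where "M = 2 * b\<^sup>2 + 2 * \<omega>\<^sup>2 * R\<^sup>2"
  obtain N \<rho> where N: "negligible N"
    and \<rho>_meas: "\<And>j. \<rho> j \<in> borel_measurable (lebesgue_on {1/2..1})"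
    and \<rho>_bound: "\<And>j t. \<bar>\<rho> j t\<bar> \<le> sqrt M"
    and \<rho>_sum: "\<And>n t. (\<Sum>j<n. (\<rho> j t)\<^sup>2) \<le> M"
    and \<rho>_1: "\<And>j. \<rho> j 1 = 0"
    and der: "\<And>j t. t \<in> {1/2..1} - N
                \<Longrightarrow> ((\<lambda>s. coef (u s) j) has_real_derivative \<rho> j t - lam j * coef (u t) j) (at t)"
    by (rule solution_forcing_coefs[OF sol R, folded M_def]) (assumption | rule that)+
  have u_inH: "\<And>t. 0 \<le> t \<Longrightarrow> inH (u t)"
    using sol by (simp add: solP_def hcont_def)
  have hab: "habscont u (1/2) 1"
    using sol by (simp add: solP_def)
  define I where "I j = (\<integral>\<tau>. lam j powr \<beta> * exp (- (lam j * (1 - \<tau>))) * (\<rho> j \<tau>)\<^sup>2 \<partial>lebesgue_on {1/2..1})"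
    for j
  have "(\<Sum>j<n. lam j powr (1 + \<beta>) * (coef (u 1) j)\<^sup>2) \<le> (\<Sum>j<n. 8 * (coef (u (1/2)) j)\<^sup>2 + 2 * I j)"
  proof (rule sum_mono)
    fix j
    show "lam j powr (1 + \<beta>) * (coef (u 1) j)\<^sup>2 \<le> 8 * (coef (u (1/2)) j)\<^sup>2 + 2 * I j"
      using solution_coef_estimate[OF hab u_inH R N der \<rho>_meas \<rho>_bound, where j = j and p = "1 + \<beta>"]
        \<open>0 \<le> \<beta>\<close> \<open>\<beta> < 1\<close> by (simp add: I_def)
  qed
  also have "\<dots> = 8 * (\<Sum>j<n. (coef (u (1/2)) j)\<^sup>2) + 2 * (\<Sum>j<n. I j)"
    by (simp add: sum.distrib sum_distrib_left)
  also have "(\<Sum>j<n. (coef (u (1/2)) j)\<^sup>2) \<le> R\<^sup>2"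
    using coef_Bessel_inequality[OF u_inH, of "1/2" n] R[of "1/2"] hnorm_nonneg[of "u (1/2)"]
    by (auto intro: order_trans power_mono)
  also have "(\<Sum>j<n. I j) \<le> M * ((1/2) powr (1 - \<beta>) / (1 - \<beta>))"
    unfolding I_def using \<rho>_meas \<rho>_bound \<rho>_sum \<rho>_1 \<open>0 \<le> \<beta>\<close> \<open>\<beta> < 1\<close> by (rule sum_mode_integrals_le)
  finally show ?thesis
    by (simp add: M_def)
qed

section \<open>Compactness of the attractor\<close>

lemma sum_lam_powr_split_le:
  assumes "2 * r \<le> q" and bound: "\<And>N. (\<Sum>j<N. lam j powr q * (d j)\<^sup>2) \<le> C"
  shows "(\<Sum>j<N. lam j powr (2 * r) * (d j)\<^sup>2)
           \<le> (\<Sum>j<J. lam j powr (2 * r) * (d j)\<^sup>2) + lam J powr (2 * r - q) * C"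
proof -
  have tail: "lam j powr (2 * r) \<le> lam J powr (2 * r - q) * lam j powr q" if "J \<le> j" for j
  proof -
    have "lam j powr (2 * r) = lam j powr (2 * r - q) * lam j powr q"
      by (simp add: powr_add[symmetric])
    also have "lam j powr (2 * r - q) \<le> lam J powr (2 * r - q)"
      using assms(1) lam_pos[of J] lam_mono[OF that] by (intro powr_mono2') auto
    finally show ?thesis
      by (simp add: mult_right_mono)
  qed
  have "(\<Sum>j<N. lam j powr (2 * r) * (d j)\<^sup>2)
          \<le> (\<Sum>j<N. (if j < J then lam j powr (2 * r) * (d j)\<^sup>2 else 0)
                     + lam J powr (2 * r - q) * (lam j powr q * (d j)\<^sup>2))"
  proof (rule sum_mono)
    fix j
    show "lam j powr (2 * r) * (d j)\<^sup>2 \<le> (if j < J then lam j powr (2 * r) * (d j)\<^sup>2 else 0)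
            + lam J powr (2 * r - q) * (lam j powr q * (d j)\<^sup>2)"
      using tail[of j] mult_right_mono[OF tail[of j], of "(d j)\<^sup>2"] by (auto simp: mult.assoc)
  qed
  also have "\<dots> = (\<Sum>j\<in>{..<N} \<inter> {..<J}. lam j powr (2 * r) * (d j)\<^sup>2)
                    + lam J powr (2 * r - q) * (\<Sum>j<N. lam j powr q * (d j)\<^sup>2)"
    by (simp add: sum.distrib sum_distrib_left sum.inter_restrict)
  also have "\<dots> \<le> (\<Sum>j<J. lam j powr (2 * r) * (d j)\<^sup>2) + lam J powr (2 * r - q) * C"
    by (intro add_mono sum_mono2 mult_left_mono bound) auto
  finally show ?thesis .
qed

lemma suminf_tendsto_zero_uniform_tail:
  fixes F :: "nat \<Rightarrow> nat \<Rightarrow> real"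
  assumes nonneg: "\<And>n j. 0 \<le> F n j"
    and tail: "\<And>n N J. (\<Sum>j<N. F n j) \<le> (\<Sum>j<J. F n j) + T J"
    and T: "T \<longlonglongrightarrow> 0" and modes: "\<And>j. (\<lambda>n. F n j) \<longlonglongrightarrow> 0"
  shows "(\<lambda>n. suminf (F n)) \<longlonglongrightarrow> 0"
proof (rule order_tendstoI)
  have summable: "summable (F n)" for n
    using tail[of n _ 0] nonneg by (intro summableI_nonneg_bounded) auto
  show "\<forall>\<^sub>F n in sequentially. e < suminf (F n)" if "e < 0" for e
  proof (intro always_eventually allI)
    fix n
    have "0 \<le> suminf (F n)"
      using summable nonneg by (rule suminf_nonneg)
    with \<open>e < 0\<close> show "e < suminf (F n)"
      by linarith
  qed
  show "\<forall>\<^sub>F n in sequentially. suminf (F n) < e" if "0 < e" for e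
  proof -
    have "\<forall>\<^sub>F J in sequentially. T J < e / 2"
      using T \<open>0 < e\<close> by (intro order_tendstoD(2)) auto
    then obtain J where J: "T J < e / 2"
      by (auto simp: eventually_sequentially)
    have "(\<lambda>n. \<Sum>j<J. F n j) \<longlonglongrightarrow> (\<Sum>j<J. 0)"
      using modes by (intro tendsto_sum)
    then have "\<forall>\<^sub>F n in sequentially. (\<Sum>j<J. F n j) < e / 2"
      using \<open>0 < e\<close> by (intro order_tendstoD(2)) auto
    then show ?thesis
    proof eventually_elim
      case (elim n)
      have "suminf (F n) \<le> (\<Sum>j<J. F n j) + T J"
        using tail by (intro suminf_le_const summable)
      with elim J show ?case
        by linarith
    qed
  qed
qed

lemma Arnorm_diff_tendsto_zero:
  fixes s :: "nat \<Rightarrow> real \<Rightarrow> real"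
  assumes s_inH: "\<And>n. inH (s n)" and a_inH: "inH a"
    and s_bound: "\<And>n N. (\<Sum>j<N. lam j powr q * (coef (s n) j)\<^sup>2) \<le> C"
    and a_bound: "\<And>N. (\<Sum>j<N. lam j powr q * (coef a j)\<^sup>2) \<le> C"
    and lim: "(\<lambda>n. hdist (s n) a) \<longlonglongrightarrow> 0" and "2 * r < q"
  shows "(\<lambda>n. Arnorm r (\<lambda>x. s n x - a x)) \<longlonglongrightarrow> 0"
proof -
  define d where "d n j = coef (s n) j - coef a j" for n j
  define F where "F n j = lam j powr (2 * r) * (d n j)\<^sup>2" for n j
  have d_bound: "(\<Sum>j<N. lam j powr q * (d n j)\<^sup>2) \<le> 4 * C" for n N
  proof -
    have sq: "(d n j)\<^sup>2 \<le> 2 * (coef (s n) j)\<^sup>2 + 2 * (coef a j)\<^sup>2" for j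
      using zero_le_power2[of "coef (s n) j + coef a j"] by (simp add: d_def power2_eq_square algebra_simps)
    then have "lam j powr q * (d n j)\<^sup>2
                 \<le> 2 * (lam j powr q * (coef (s n) j)\<^sup>2) + 2 * (lam j powr q * (coef a j)\<^sup>2)" for j
      using mult_left_mono[OF sq[of j], of "lam j powr q"] by (simp add: algebra_simps)
    then have "(\<Sum>j<N. lam j powr q * (d n j)\<^sup>2)
                 \<le> 2 * (\<Sum>j<N. lam j powr q * (coef (s n) j)\<^sup>2) + 2 * (\<Sum>j<N. lam j powr q * (coef a j)\<^sup>2)"
      by (simp add: sum_mono sum_distrib_left flip: sum.distrib)
    also have "\<dots> \<le> 4 * C"
      using s_bound[of n N] a_bound[of N] by linarith
    finally show ?thesis .
  qed
  have "(\<lambda>n. suminf (F n)) \<longlonglongrightarrow> 0"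
  proof (rule suminf_tendsto_zero_uniform_tail)
    show "(\<Sum>j<N. F n j) \<le> (\<Sum>j<J. F n j) + lam J powr (2 * r - q) * (4 * C)" for n N J
      unfolding F_def using \<open>2 * r < q\<close> d_bound by (intro sum_lam_powr_split_le) auto
    show "(\<lambda>J. lam J powr (2 * r - q) * (4 * C)) \<longlonglongrightarrow> 0"
      using \<open>2 * r < q\<close> tendsto_mult_right[OF tendsto_neg_powr[OF _ filterlim_lam_at_top], of "2 * r - q" "4 * C"]
      by simp
    show "(\<lambda>n. F n j) \<longlonglongrightarrow> 0" for j
    proof -
      have "(\<lambda>n. d n j) \<longlonglongrightarrow> 0"
        using abs_coef_diff_le_hdist[OF s_inH a_inH]
        by (intro Lim_null_comparison[OF always_eventually lim]) (simp add: d_def)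
      then have "(\<lambda>n. lam j powr (2 * r) * (d n j)\<^sup>2) \<longlonglongrightarrow> lam j powr (2 * r) * 0\<^sup>2"
        by (intro tendsto_intros)
      then show ?thesis
        by (simp add: F_def)
    qed
  qed (simp add: F_def)
  then have "(\<lambda>n. sqrt (suminf (F n))) \<longlonglongrightarrow> sqrt 0"
    by (rule tendsto_real_sqrt)
  moreover have "Arnorm r (\<lambda>x. s n x - a x) = sqrt (suminf (F n))" for n
    by (simp add: Arnorm_def F_def[abs_def] d_def coef_diff[OF s_inH a_inH])
  ultimately show ?thesis
    by simp
qed

lemma inDA_of_bounded_sums:
  assumes "inH f" and "2 * r \<le> q" and bound: "\<And>N. (\<Sum>j<N. lam j powr q * (coef f j)\<^sup>2) \<le> C"
  shows "inDA r f"
  unfolding inDA_def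
proof
  have "(\<Sum>j<N. lam j powr (2 * r) * (coef f j)\<^sup>2) \<le> (\<Sum>j<N. lam j powr q * (coef f j)\<^sup>2)" for N
    using lam_ge_1 \<open>2 * r \<le> q\<close> by (intro sum_mono mult_right_mono powr_mono) auto
  then have "(\<Sum>j<N. lam j powr (2 * r) * (coef f j)\<^sup>2) \<le> C" for N
    using bound[of N] by (rule order_trans)
  then show "summable (\<lambda>j. lam j powr (2 * r) * (coef f j)\<^sup>2)"
    by (intro summableI_nonneg_bounded) auto
qed fact

lemma Hcompact_hnorm_bounded:
  assumes K: "Hcompact K"
  obtains R where "\<And>f. f \<in> K \<Longrightarrow> hnorm f \<le> R"
proof (rule ccontr)
  assume "\<not> thesis"
  with that have "\<forall>n::nat. \<exists>f\<in>K. real n < hnorm f"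
    by (meson linorder_not_le)
  then obtain s where s: "\<And>n. s n \<in> K" "\<And>n. real n < hnorm (s n)"
    by metis
  obtain a \<sigma> where "a \<in> K" and "strict_mono \<sigma>" and lim: "(\<lambda>n. hdist (s (\<sigma> n)) a) \<longlonglongrightarrow> 0"
    using K s(1) unfolding Hcompact_def by blast
  have inH: "\<And>f. f \<in> K \<Longrightarrow> inH f"
    using K by (simp add: Hcompact_def)
  have "\<forall>\<^sub>F n in sequentially. hdist (s (\<sigma> n)) a < 1"
    using lim by (rule order_tendstoD(2)) simp
  then obtain N where N: "\<And>n. N \<le> n \<Longrightarrow> hdist (s (\<sigma> n)) a < 1"
    by (auto simp: eventually_sequentially)
  define M where "M = 2 + 2 * (hnorm a)\<^sup>2"
  obtain n where n: "N \<le> n" "M < real n"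
    using reals_Archimedean2[of M] by (metis le_cases less_le_trans of_nat_le_iff)
  have "(hnorm (s (\<sigma> n)))\<^sup>2 \<le> 2 * (hdist (s (\<sigma> n)) a)\<^sup>2 + 2 * (hnorm a)\<^sup>2"
    using hnorm_sq_le_hdist[OF inH[OF s(1)] inH[OF \<open>a \<in> K\<close>]] .
  also have "(hdist (s (\<sigma> n)) a)\<^sup>2 \<le> 1"
    using N[OF n(1)] hnorm_nonneg by (simp add: hdist_def abs_square_le_1)
  finally have "(hnorm (s (\<sigma> n)))\<^sup>2 \<le> M"
    by (simp add: M_def)
  moreover have "real n < hnorm (s (\<sigma> n))"
    using seq_suble[OF \<open>strict_mono \<sigma>\<close>, of n] s(2)[of "\<sigma> n"] by linarith
  then have "(real n)\<^sup>2 < (hnorm (s (\<sigma> n)))\<^sup>2"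
    by (intro power_strict_mono) auto
  moreover have "real n \<le> (real n)\<^sup>2"
  proof -
    have "1 \<le> real n"
      using n(2) zero_le_power2[of "hnorm a"] unfolding M_def by linarith
    then show ?thesis
      using mult_left_mono[of 1 "real n" "real n"] by (simp add: power2_eq_square)
  qed
  ultimately show False
    using n(2) by linarith
qed

lemma attractor_trajectory:
  assumes att: "global_attractor b \<omega> K" and "v \<in> K"
  obtains u0 u where "solP b \<omega> u0 u" and "hdist v (u 1) = 0" and "\<And>t. 0 \<le> t \<Longrightarrow> u t \<in> K"
proof -
  have inv: "\<And>t. 0 \<le> t \<Longrightarrow> Gset b \<omega> t K = K"
    using att by (simp add: global_attractor_def)
  then have "v \<in> Gset b \<omega> 1 K"
    using \<open>v \<in> K\<close> by simp
  then obtain u0 u where "u0 \<in> K" and sol: "solP b \<omega> u0 u" and "hdist v (u 1) = 0"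
    unfolding Gset_def Gmap_def by blast
  have "u t \<in> K" if "0 \<le> t" for t
  proof -
    have "inH (u t)"
      using sol that by (simp add: solP_def hcont_def)
    then have "u t \<in> Gmap b \<omega> t u0"
      unfolding Gmap_def using sol hdist_self by blast
    then show ?thesis
      using \<open>u0 \<in> K\<close> inv[OF that] unfolding Gset_def by blast
  qed
  with sol \<open>hdist v (u 1) = 0\<close> show ?thesis
    by (rule that)
qed

lemma attractor_smoothing_bound:
  assumes att: "global_attractor b \<omega> K" and "0 \<le> \<beta>" and "\<beta> < 1"
  obtains C where "\<And>v N. v \<in> K \<Longrightarrow> (\<Sum>j<N. lam j powr (1 + \<beta>) * (coef v j)\<^sup>2) \<le> C"
proof -
  have K: "Hcompact K"
    using att by (simp add: global_attractor_def)
  obtain R where R: "\<And>f. f \<in> K \<Longrightarrow> hnorm f \<le> R"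
    using Hcompact_hnorm_bounded[OF K] by blast
  define C where "C = 8 * R\<^sup>2 + 2 * ((2 * b\<^sup>2 + 2 * \<omega>\<^sup>2 * R\<^sup>2) * ((1/2) powr (1 - \<beta>) / (1 - \<beta>)))"
  have "(\<Sum>j<N. lam j powr (1 + \<beta>) * (coef v j)\<^sup>2) \<le> C" if "v \<in> K" for v N
  proof -
    obtain u0 u where sol: "solP b \<omega> u0 u" and "hdist v (u 1) = 0" and traj: "\<And>t. 0 \<le> t \<Longrightarrow> u t \<in> K"
      using attractor_trajectory[OF att \<open>v \<in> K\<close>] by blast
    have "coef v j = coef (u 1) j" for j
      using K \<open>v \<in> K\<close> traj[of 1] \<open>hdist v (u 1) = 0\<close>
      by (intro coef_eq_if_hdist_eq_0) (auto simp: Hcompact_def)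
    moreover have "(\<Sum>j<N. lam j powr (1 + \<beta>) * (coef (u 1) j)\<^sup>2) \<le> C"
      unfolding C_def using sol R traj \<open>0 \<le> \<beta>\<close> \<open>\<beta> < 1\<close> by (intro solution_smoothing_estimate) auto
    ultimately show ?thesis
      by simp
  qed
  then show ?thesis
    by (rule that)
qed

theorem lemma8:
  fixes b \<omega> :: real and Att :: "(real \<Rightarrow> real) set"
  assumes "b > 0" and "0 \<le> \<omega>" and "\<omega> < pi\<^sup>2"
    and "global_attractor b \<omega> Att"
  shows "\<forall>r. 0 \<le> r \<and> r < 1 \<longrightarrow> Vcompact r Att"
proof (intro allI impI)
  fix r :: real
  assume r: "0 \<le> r \<and> r < 1"
  have K: "Hcompact Att"
    using assms(4) by (simp add: global_attractor_def)
  then have inH: "\<And>f. f \<in> Att \<Longrightarrow> inH f"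
    by (simp add: Hcompact_def)
  obtain C where C: "\<And>v N. v \<in> Att \<Longrightarrow> (\<Sum>j<N. lam j powr (1 + r) * (coef v j)\<^sup>2) \<le> C"
    using attractor_smoothing_bound[OF assms(4)] r by blast
  have "2 * r < 1 + r"
    using r by simp
  show "Vcompact r Att"
    unfolding Vcompact_def
  proof (intro conjI ballI allI impI)
    show "inDA r f" if "f \<in> Att" for f
      using inH[OF that] \<open>2 * r < 1 + r\<close> C[OF that]
      by (intro inDA_of_bounded_sums[where q = "1 + r" and C = C]) auto
    fix s :: "nat \<Rightarrow> real \<Rightarrow> real"
    assume "\<forall>n. s n \<in> Att"
    then obtain a \<sigma> where "a \<in> Att" "strict_mono \<sigma>" and lim: "(\<lambda>n. hdist (s (\<sigma> n)) a) \<longlonglongrightarrow> 0"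
      using K unfolding Hcompact_def by blast
    moreover have "(\<lambda>n. Arnorm r (\<lambda>x. s (\<sigma> n) x - a x)) \<longlonglongrightarrow> 0"
      using \<open>\<forall>n. s n \<in> Att\<close> \<open>a \<in> Att\<close> inH C lim \<open>2 * r < 1 + r\<close>
      by (intro Arnorm_diff_tendsto_zero) auto
    ultimately show "\<exists>a\<in>Att. \<exists>\<sigma>. strict_mono \<sigma> \<and> (\<lambda>n. Arnorm r (\<lambda>x. s (\<sigma> n) x - a x)) \<longlonglongrightarrow> 0"
      by blast
  qed
qed

end
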